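(* Let $(\mathbf X_k)_{k\in\mathbb Z_+}$ be a 2-type doubly symmetric Galton--Watson process with immigration (see context) with offspring means $(\alpha,\beta)\in(0,1)^2$, $\alpha+\beta=1$, $\mathbf X_0=\mathbf 0$, and suppose $\mathbb E\|\boldsymbol\xi_{1,1,1}\|^\ell,\mathbb E\|\boldsymbol\xi_{1,1,2}\|^\ell,\mathbb E\|\boldsymbol\varepsilon_1\|^\ell<\infty$ for some $\ell\in\mathbb N$. Then, as $k\to\infty$, $\mathbb E\|\mathbf X_k\|^\ell=O(k^\ell)$, $\mathbb E(\mathbf M_k^{\otimes\ell})=O(k^{\lfloor\ell/2\rfloor})$, $\mathbb E(U_k^\ell)=O(k^\ell)$, and $\mathbb E(V_k^{2j})=O(k^j)$ for every $j\in\mathbb Z_+$ with $2j\le\ell$.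
   Context: Process: $\mathbf X_k=(X_{k,1},X_{k,2})^\top$, $\mathbf X_0=\mathbf 0$, and for $k\in\mathbb N$, $\mathbf X_k=\sum_{j=1}^{X_{k-1,1}}\boldsymbol\xi_{k,j,1}+\sum_{j=1}^{X_{k-1,2}}\boldsymbol\xi_{k,j,2}+\boldsymbol\varepsilon_k$, where $\{\boldsymbol\xi_{k,j,i},\boldsymbol\varepsilon_k:k,j\in\mathbb N,i\in\{1,2\}\}$ are independent $\mathbb Z_+^2$-valued random vectors and each of the families $\{\boldsymbol\xi_{k,j,1}\}$, $\{\boldsymbol\xi_{k,j,2}\}$, $\{\boldsymbol\varepsilon_k\}$ is identically distributed. $\mathbb E\boldsymbol\xi_{1,1,1}=(\alpha,\beta)^\top$, $\mathbb E\boldsymbol\xi_{1,1,2}=(\beta,\alpha)^\top$, $\mathbf m_{\boldsymbol\xi}=\begin{bmatrix}\alpha&\beta\\\beta&\alpha\end{bmatrix}$, $\mathbf m_{\boldsymbol\varepsilon}=\mathbb E\boldsymbol\varepsilon_1$. $\mathbf M_k=\mathbf X_k-\mathbf m_{\boldsymbol\xi}\mathbf X_{k-1}-\mathbf m_{\boldsymbol\varepsilon}$, $U_k=X_{k,1}+X_{k,2}$, $V_k=X_{k,1}-X_{k,2}$; $\mathbf M_k^{\otimes\ell}$ is the $\ell$-fold Kronecker power, and $O(\cdot)$ for vectors is meant componentwise (equivalently in norm). *)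

theory Defs
  imports "HOL-Probability.Probability" "HOL-Library.Landau_Symbols"
begin

text \<open>Index set for the independent family of offspring and immigration vectors.
  Xi k j i stands for xi_{k,j,i} (k,j >= 1, i in {1,2}); Eps k stands for eps_k (k >= 1).\<close>
datatype gw_idx = Xi nat nat nat | Eps nat

definition gw_family ::
  "(nat \<Rightarrow> nat \<Rightarrow> nat \<Rightarrow> 'a \<Rightarrow> nat \<times> nat) \<Rightarrow> (nat \<Rightarrow> 'a \<Rightarrow> nat \<times> nat) \<Rightarrow> gw_idx \<Rightarrow> 'a \<Rightarrow> nat \<times> nat"
  where "gw_family \<xi> \<epsilon> t \<omega> = (case t of Xi k j i \<Rightarrow> \<xi> k j i \<omega> | Eps k \<Rightarrow> \<epsilon> k \<omega>)"

definition gw_index_set :: "gw_idx set"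
  where "gw_index_set = {Xi k j i | k j i. 1 \<le> k \<and> 1 \<le> j \<and> i \<in> {1,2}} \<union> {Eps k | k. 1 \<le> k}"

fun gw_X ::
  "(nat \<Rightarrow> nat \<Rightarrow> nat \<Rightarrow> 'a \<Rightarrow> nat \<times> nat) \<Rightarrow> (nat \<Rightarrow> 'a \<Rightarrow> nat \<times> nat) \<Rightarrow> nat \<Rightarrow> 'a \<Rightarrow> nat \<times> nat"
  where
    "gw_X \<xi> \<epsilon> 0 \<omega> = (0, 0)"
  | "gw_X \<xi> \<epsilon> (Suc k) \<omega> =
       (\<Sum>j\<in>{1..fst (gw_X \<xi> \<epsilon> k \<omega>)}. \<xi> (Suc k) j 1 \<omega>)
     + (\<Sum>j\<in>{1..snd (gw_X \<xi> \<epsilon> k \<omega>)}. \<xi> (Suc k) j 2 \<omega>)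
     + \<epsilon> (Suc k) \<omega>"

definition vec_real :: "nat \<times> nat \<Rightarrow> real \<times> real"
  where "vec_real v = (real (fst v), real (snd v))"

text \<open>Entry of the l-fold Kronecker power of a vector v in R^2 (components v 1, v 2),
  at the multi-index is = [i_1,...,i_l] with i_r in {1,2}.\<close>
definition kron_pow_entry :: "(nat \<Rightarrow> real) \<Rightarrow> nat list \<Rightarrow> real"
  where "kron_pow_entry v is = (\<Prod>i\<leftarrow>is. v i)"

end

theory Submission
  imports Defs
begin

text \<open>Given \<open>X\<^sub>k\<close>, every coordinate of \<open>M\<^sub>k\<^sub>+\<^sub>1\<close> (and every linear functional of the increment) is a
  sum of \<open>U\<^sub>k + 1\<close> independent centred terms. Expanding a product of \<open>m\<close> such sums, only index maps
  without singleton fibres survive, and for \<open>N\<close> summands there are \<open>O(N^(m div 2))\<close> of them; hence conditional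
  \<open>m\<close>-th moments are \<open>O((1 + U\<^sub>k)^(m div 2))\<close>. Since \<open>\<alpha> + \<beta> = 1\<close>, \<open>U\<close> is critical:
  \<open>E(1 + U\<^sub>k\<^sub>+\<^sub>1)^p \<le> E(1 + U\<^sub>k)^p + D E(1 + U\<^sub>k)^(p-1)\<close>, so \<open>E(1 + U\<^sub>k)^p = O(k^p)\<close> by induction
  on \<open>p\<close>. The difference \<open>V\<close> has conditional mean \<open>(\<alpha> - \<beta>) V\<^sub>k + const\<close> with \<open>\<bar>\<alpha> - \<beta>\<bar> < 1\<close>,
  so \<open>E V\<^sub>k^(2j)\<close> satisfies a contracting recursion driven by \<open>E(1 + U\<^sub>k)^j = O(k^j)\<close>.\<close>

lemma power_abs_le_1_plus_power:
  fixes x :: real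
  assumes "i \<le> m"
  shows "\<bar>x\<bar>^i \<le> 1 + \<bar>x\<bar>^m"
proof (cases "\<bar>x\<bar> \<le> 1")
  case True
  then have "\<bar>x\<bar>^i \<le> 1" by (simp add: power_le_one)
  then show ?thesis by (smt (verit) zero_le_power abs_ge_zero)
next
  case False
  then have "\<bar>x\<bar>^i \<le> \<bar>x\<bar>^m" using assms by (intro power_increasing) auto
  then show ?thesis by simp
qed

lemma prod_abs_le_1_plus_sum_power:
  fixes x :: "'r \<Rightarrow> real"
  assumes R: "finite R" and card: "card R \<le> m"
  shows "(\<Prod>r\<in>R. \<bar>x r\<bar>) \<le> 1 + (\<Sum>r\<in>R. \<bar>x r\<bar>^m)"
proof -
  define S where "S = insert 1 ((\<lambda>r. \<bar>x r\<bar>) ` R)"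
  have S: "finite S" using R by (simp add: S_def)
  have Max_ge1: "1 \<le> Max S" and Max_ge: "\<And>r. r \<in> R \<Longrightarrow> \<bar>x r\<bar> \<le> Max S"
    using S by (simp_all add: S_def)
  have "(\<Prod>r\<in>R. \<bar>x r\<bar>) \<le> (\<Prod>r\<in>R. Max S)"
    by (intro prod_mono) (auto simp: Max_ge)
  also have "\<dots> \<le> Max S ^ m"
    using Max_ge1 card by (simp add: power_increasing)
  also have "\<dots> \<le> 1 + (\<Sum>r\<in>R. \<bar>x r\<bar>^m)"
  proof -
    have "Max S \<in> S" using S by (intro Max_in) (auto simp: S_def)
    then consider "Max S = 1" | r where "r \<in> R" "Max S = \<bar>x r\<bar>" by (auto simp: S_def)
    then show ?thesis
    proof cases
      case 1
      then show ?thesis by (simp add: sum_nonneg)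
    next
      case 2
      then have "\<bar>x r\<bar>^m \<le> (\<Sum>r\<in>R. \<bar>x r\<bar>^m)" using R by (intro member_le_sum) auto
      then show ?thesis using 2 by simp
    qed
  qed
  finally show ?thesis .
qed

lemma power_add_le_2_power:
  fixes x y :: real
  assumes "0 \<le> x" "0 \<le> y"
  shows "(x + y)^n \<le> 2^n * (x^n + y^n)"
proof -
  have "(x + y)^n \<le> (2 * max x y)^n" using assms by (intro power_mono) auto
  also have "\<dots> = 2^n * (max x y)^n" by (simp add: power_mult_distrib)
  also have "(max x y)^n \<le> x^n + y^n" using assms by (cases "x \<le> y") (auto simp: max_def)
  then have "2^n * (max x y)^n \<le> 2^n * (x^n + y^n)" by simp
  finally show ?thesis .
qed

lemma power_add_power_pred_le_Suc_power:
  fixes x :: real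
  assumes "0 \<le> x" "1 \<le> p"
  shows "x^p + x^(p-1) \<le> (x + 1)^p"
proof -
  obtain q where q: "p = Suc q" using assms by (cases p) auto
  have "x^q \<le> (x+1)^q" using assms by (intro power_mono) auto
  then have "x * x^q + x^q \<le> x * (x+1)^q + (x+1)^q" using assms by (intro add_mono mult_left_mono) auto
  then show ?thesis using q by (simp add: algebra_simps)
qed

lemma sum_choose_real: "(\<Sum>i\<le>p. real (p choose i)) = 2^p"
  using choose_row_sum[of p] by (metis of_nat_numeral of_nat_power of_nat_sum)

lemma sum_if_zero_le:
  fixes g :: "nat \<Rightarrow> real"
  assumes "\<And>i. 0 \<le> g i"
  shows "(\<Sum>i\<le>p. if i = 0 then a else g i) \<le> a + (\<Sum>i\<le>p. g i)"
proof -
  have "(\<Sum>i\<le>p. if i = 0 then a else g i) = a + (\<Sum>i\<le>p. if i = 0 then 0 else g i)"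
    by (simp add: sum.If_cases Int_absorb1 atMost_def)
  also have "(\<Sum>i\<le>p. if i = 0 then 0 else g i) \<le> (\<Sum>i\<le>p. g i)"
    by (intro sum_mono) (auto simp: assms)
  finally show ?thesis by simp
qed

section \<open>Counting index maps without singleton fibres\<close>

lemma card_image_le_half_if_no_singleton_fibre:
  fixes \<sigma> :: "nat \<Rightarrow> 'j"
  assumes "\<forall>t\<in>\<sigma> ` {..<m}. card {r. r < m \<and> \<sigma> r = t} \<noteq> 1"
  shows "card (\<sigma> ` {..<m}) \<le> m div 2"
proof -
  have "m = (\<Sum>t\<in>\<sigma> ` {..<m}. card {r. r < m \<and> \<sigma> r = t})"
    using card_eq_sum[of "{..<m}"] sum.group[of "{..<m}" "\<sigma> ` {..<m}" \<sigma> "\<lambda>_. 1::nat"]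
    by (auto intro!: sum.cong simp: Collect_conj_eq lessThan_def)
  moreover have "(\<Sum>t\<in>\<sigma> ` {..<m}. 2) \<le> (\<Sum>t\<in>\<sigma> ` {..<m}. card {r. r < m \<and> \<sigma> r = t})"
  proof (rule sum_mono)
    fix t assume t: "t \<in> \<sigma> ` {..<m}"
    then have "card {r. r < m \<and> \<sigma> r = t} \<noteq> 0" by auto
    moreover have "card {r. r < m \<and> \<sigma> r = t} \<noteq> 1" using assms t by blast
    ultimately show "2 \<le> card {r. r < m \<and> \<sigma> r = t}" by linarith
  qed
  ultimately show ?thesis by simp
qed

lemma ex_PiE_image_covers:
  assumes S: "finite S" "S \<noteq> {}" "S \<subseteq> J" "card S \<le> p"
  shows "\<exists>f\<in>{..<p} \<rightarrow>\<^sub>E J. S \<subseteq> f ` {..<p}"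
proof -
  obtain h where h: "bij_betw h {0..<card S} S" using ex_bij_betw_nat_finite[OF S(1)] by blast
  have pos: "0 < card S" using S by (simp add: card_gt_0_iff)
  have hS: "\<And>i. i < card S \<Longrightarrow> h i \<in> S" using h by (auto simp: bij_betw_def)
  define f where "f = restrict (\<lambda>i. if i < card S then h i else h 0) {..<p}"
  have "f \<in> {..<p} \<rightarrow>\<^sub>E J" unfolding f_def using hS pos S(3) by auto
  moreover have "S \<subseteq> f ` {..<p}"
  proof
    fix t assume "t \<in> S"
    then have "t \<in> h ` {0..<card S}" using h by (simp add: bij_betw_def)
    then obtain i where "i < card S" "h i = t" by auto
    then show "t \<in> f ` {..<p}" using S(4) by (auto simp: f_def image_iff intro!: bexI[of _ i])
  qed
  ultimately show ?thesis by blast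
qed

text \<open>An index map without singleton fibres takes at most \<open>m div 2\<close> values, so it factors
  through \<open>{..<m div 2}\<close>.\<close>

lemma card_no_singleton_fibre_le:
  assumes J: "finite J"
  shows "card {\<sigma> \<in> {..<m} \<rightarrow>\<^sub>E J. \<forall>t\<in>J. card {r. r < m \<and> \<sigma> r = t} \<noteq> 1}
           \<le> m^m * card J ^ (m div 2)"
proof (cases "m = 0")
  case True
  then show ?thesis
    by (simp add: card_mono[of "{..<0} \<rightarrow>\<^sub>E J", THEN order_trans] finite_PiE J)
next
  case False
  define p where "p = m div 2"
  let ?B = "{\<sigma> \<in> {..<m} \<rightarrow>\<^sub>E J. \<forall>t\<in>J. card {r. r < m \<and> \<sigma> r = t} \<noteq> 1}"
  have cover: "?B \<subseteq> (\<Union>f\<in>{..<p} \<rightarrow>\<^sub>E J. {..<m} \<rightarrow>\<^sub>E f ` {..<p})"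
  proof
    fix \<sigma> assume \<sigma>: "\<sigma> \<in> ?B"
    have "card (\<sigma> ` {..<m}) \<le> p" unfolding p_def
      by (rule card_image_le_half_if_no_singleton_fibre) (use \<sigma> in auto)
    then obtain f where "f \<in> {..<p} \<rightarrow>\<^sub>E J" "\<sigma> ` {..<m} \<subseteq> f ` {..<p}"
      using ex_PiE_image_covers[of "\<sigma> ` {..<m}" J p] \<sigma> False by auto
    then show "\<sigma> \<in> (\<Union>f\<in>{..<p} \<rightarrow>\<^sub>E J. {..<m} \<rightarrow>\<^sub>E f ` {..<p})"
      using \<sigma> by (auto simp: PiE_def Pi_def)
  qed
  have "card ?B \<le> card (\<Union>f\<in>{..<p} \<rightarrow>\<^sub>E J. {..<m} \<rightarrow>\<^sub>E f ` {..<p})"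
    by (intro card_mono cover) (auto simp: J finite_PiE)
  also have "\<dots> \<le> (\<Sum>f\<in>{..<p} \<rightarrow>\<^sub>E J. card ({..<m} \<rightarrow>\<^sub>E f ` {..<p}))"
    by (rule card_UN_le) (simp add: J finite_PiE)
  also have "\<dots> \<le> (\<Sum>f\<in>{..<p} \<rightarrow>\<^sub>E J. m^m)"
  proof (rule sum_mono)
    fix f
    have "card ({..<m} \<rightarrow>\<^sub>E f ` {..<p}) = card (f ` {..<p}) ^ m" by (simp add: card_PiE)
    also have "\<dots> \<le> m ^ m"
      by (intro power_mono) (auto simp: p_def intro: card_image_le[THEN order_trans])
    finally show "card ({..<m} \<rightarrow>\<^sub>E f ` {..<p}) \<le> m^m" .
  qed
  also have "\<dots> = m^m * card J ^ p" by (simp add: card_PiE)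
  finally show ?thesis by (simp add: p_def)
qed

section \<open>Moments of products of independent centred sums\<close>

context prob_space
begin

lemma measurable_fun_indep_var:
  assumes "indep_vars (\<lambda>_. count_space UNIV) Y J" "t \<in> J"
  shows "(\<lambda>\<omega>. h (Y t \<omega>) :: real) \<in> borel_measurable M"
  using assms by (auto simp: indep_vars_def intro: measurable_compose[where N="count_space UNIV"])

lemma integrable_prod_if_power_integrable:
  fixes f :: "'r \<Rightarrow> 'a \<Rightarrow> real"
  assumes R: "finite R" "card R \<le> m"
    and meas: "\<And>r. r \<in> R \<Longrightarrow> f r \<in> borel_measurable M"
    and int: "\<And>r. r \<in> R \<Longrightarrow> integrable M (\<lambda>\<omega>. \<bar>f r \<omega>\<bar>^m)"
  shows "integrable M (\<lambda>\<omega>. \<Prod>r\<in>R. f r \<omega>)"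
  by (rule Bochner_Integration.integrable_bound[of _ "\<lambda>\<omega>. 1 + (\<Sum>r\<in>R. \<bar>f r \<omega>\<bar>^m)"])
     (use int meas prod_abs_le_1_plus_sum_power[OF R] in \<open>auto simp: abs_prod intro!: AE_I2
        order_trans[OF _ abs_ge_self]\<close>)

lemma expectation_abs_prod_le:
  fixes f :: "'r \<Rightarrow> 'a \<Rightarrow> real"
  assumes R: "finite R" "card R \<le> m" and K: "0 \<le> K"
    and meas: "\<And>r. r \<in> R \<Longrightarrow> f r \<in> borel_measurable M"
    and int: "\<And>r. r \<in> R \<Longrightarrow> integrable M (\<lambda>\<omega>. \<bar>f r \<omega>\<bar>^m)"
    and mom: "\<And>r. r \<in> R \<Longrightarrow> expectation (\<lambda>\<omega>. \<bar>f r \<omega>\<bar>^m) \<le> K"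
  shows "expectation (\<lambda>\<omega>. \<bar>\<Prod>r\<in>R. f r \<omega>\<bar>) \<le> 1 + real m * K"
proof -
  have "expectation (\<lambda>\<omega>. \<bar>\<Prod>r\<in>R. f r \<omega>\<bar>) \<le> expectation (\<lambda>\<omega>. 1 + (\<Sum>r\<in>R. \<bar>f r \<omega>\<bar>^m))"
  proof (rule integral_mono)
    show "integrable M (\<lambda>\<omega>. \<bar>\<Prod>r\<in>R. f r \<omega>\<bar>)"
      by (rule integrable_abs[OF integrable_prod_if_power_integrable[OF R meas int]])
    show "integrable M (\<lambda>\<omega>. 1 + (\<Sum>r\<in>R. \<bar>f r \<omega>\<bar>^m))" using int by auto
    show "\<bar>\<Prod>r\<in>R. f r \<omega>\<bar> \<le> 1 + (\<Sum>r\<in>R. \<bar>f r \<omega>\<bar>^m)" for \<omega>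
      using prod_abs_le_1_plus_sum_power[OF R, of "\<lambda>r. f r \<omega>"] by (simp add: abs_prod)
  qed
  also have "\<dots> = 1 + (\<Sum>r\<in>R. expectation (\<lambda>\<omega>. \<bar>f r \<omega>\<bar>^m))"
    using int by (simp add: Bochner_Integration.integral_sum prob_space)
  also have "\<dots> \<le> 1 + real (card R) * K"
    using sum_mono[of R _ "\<lambda>_. K", OF mom] by simp
  also have "\<dots> \<le> 1 + real m * K"
    using R K by (simp add: mult_right_mono)
  finally show ?thesis .
qed

text \<open>A factor whose variable occurs in no other factor splits off by independence.\<close>

lemma expectation_prod_eq_0_if_singleton_fibre:
  fixes Y :: "'j \<Rightarrow> 'a \<Rightarrow> 'b" and g :: "nat \<Rightarrow> 'j \<Rightarrow> 'b \<Rightarrow> real"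
  assumes ind: "indep_vars (\<lambda>_. count_space UNIV) Y J"
    and \<sigma>: "\<sigma> \<in> {..<m} \<rightarrow> J" and t0: "t0 \<in> J"
    and fibre: "{r. r < m \<and> \<sigma> r = t0} = {r0}"
    and mean0: "expectation (\<lambda>\<omega>. g r0 t0 (Y t0 \<omega>)) = 0"
    and int: "\<And>r t. r < m \<Longrightarrow> t \<in> J \<Longrightarrow> integrable M (\<lambda>\<omega>. \<bar>g r t (Y t \<omega>)\<bar>^m)"
  shows "expectation (\<lambda>\<omega>. \<Prod>r<m. g r (\<sigma> r) (Y (\<sigma> r) \<omega>)) = 0"
proof -
  have r0: "r0 < m" "\<sigma> r0 = t0" using fibre by auto
  note meas = measurable_fun_indep_var[OF ind]
  have int0: "integrable M (\<lambda>\<omega>. g r0 t0 (Y t0 \<omega>))"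
    by (rule Bochner_Integration.integrable_bound[of _ "\<lambda>\<omega>. 1 + \<bar>g r0 t0 (Y t0 \<omega>)\<bar>^m"])
       (use int[OF r0(1) t0] meas[OF t0] power_abs_le_1_plus_power[of 1 m] r0 in auto)
  have int_rest: "integrable M (\<lambda>\<omega>. \<Prod>r\<in>{..<m}-{r0}. g r (\<sigma> r) (Y (\<sigma> r) \<omega>))"
    using \<sigma> int meas
    by (intro integrable_prod_if_power_integrable[where m=m]) (auto simp: card_Diff_singleton_if Pi_iff)
  have rest: "\<sigma> r \<in> J - {t0}" if "r \<in> {..<m} - {r0}" for r
    using that fibre \<sigma> by auto
  define h where "h f = (\<Prod>r\<in>{..<m}-{r0}. g r (\<sigma> r) (f (\<sigma> r)))" for f :: "'j \<Rightarrow> 'b"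
  have h_restrict: "h (restrict (\<lambda>i. Y i \<omega>) (J - {t0}))
      = (\<Prod>r\<in>{..<m}-{r0}. g r (\<sigma> r) (Y (\<sigma> r) \<omega>))" for \<omega>
    unfolding h_def using rest by (intro prod.cong) auto
  have split: "(\<Prod>r<m. g r (\<sigma> r) (Y (\<sigma> r) \<omega>))
      = g r0 t0 (Y t0 \<omega>) * h (restrict (\<lambda>i. Y i \<omega>) (J - {t0}))" for \<omega>
    unfolding h_restrict using r0 by (subst prod.remove[of _ r0]) auto
  have "indep_var (Pi\<^sub>M {t0} (\<lambda>_. count_space UNIV)) (\<lambda>\<omega>. restrict (\<lambda>i. Y i \<omega>) {t0})
      (Pi\<^sub>M (J - {t0}) (\<lambda>_. count_space UNIV)) (\<lambda>\<omega>. restrict (\<lambda>i. Y i \<omega>) (J - {t0}))"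
    using t0 by (intro indep_var_restrict[OF ind]) auto
  then have "indep_var borel ((\<lambda>f. g r0 t0 (f t0)) \<circ> (\<lambda>\<omega>. restrict (\<lambda>i. Y i \<omega>) {t0}))
      borel (h \<circ> (\<lambda>\<omega>. restrict (\<lambda>i. Y i \<omega>) (J - {t0})))"
    by (rule indep_var_compose)
       (use rest in \<open>auto simp: h_def[abs_def] simp del: Diff_iff
          intro!: borel_measurable_prod measurable_compose[OF measurable_component_singleton]\<close>)
  then have indep: "indep_var borel (\<lambda>\<omega>. g r0 t0 (Y t0 \<omega>))
      borel (\<lambda>\<omega>. h (restrict (\<lambda>i. Y i \<omega>) (J - {t0})))"
    by (simp add: comp_def)
  have int_h: "integrable M (\<lambda>\<omega>. h (restrict (\<lambda>i. Y i \<omega>) (J - {t0})))"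
    using int_rest by (simp add: h_restrict)
  show ?thesis
    unfolding split indep_var_lebesgue_integral[OF indep int0 int_h] mean0 by simp
qed

text \<open>Expanding the product, a term vanishes as soon as some index is hit exactly once.\<close>

lemma indep_centred_prod_sum_moment_bound:
  fixes Y :: "'j \<Rightarrow> 'a \<Rightarrow> 'b" and g :: "nat \<Rightarrow> 'j \<Rightarrow> 'b \<Rightarrow> real"
  assumes ind: "indep_vars (\<lambda>_. count_space UNIV) Y J" and J: "finite J"
    and mean0: "\<And>r t. r < m \<Longrightarrow> t \<in> J \<Longrightarrow> expectation (\<lambda>\<omega>. g r t (Y t \<omega>)) = 0"
    and int: "\<And>r t. r < m \<Longrightarrow> t \<in> J \<Longrightarrow> integrable M (\<lambda>\<omega>. \<bar>g r t (Y t \<omega>)\<bar>^m)"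
    and mom: "\<And>r t. r < m \<Longrightarrow> t \<in> J \<Longrightarrow> expectation (\<lambda>\<omega>. \<bar>g r t (Y t \<omega>)\<bar>^m) \<le> K"
    and K: "0 \<le> K"
  shows "integrable M (\<lambda>\<omega>. \<Prod>r<m. \<Sum>t\<in>J. g r t (Y t \<omega>))"
    and "\<bar>expectation (\<lambda>\<omega>. \<Prod>r<m. \<Sum>t\<in>J. g r t (Y t \<omega>))\<bar>
           \<le> (1 + real m * K) * (m^m * card J ^ (m div 2))"
proof -
  define P where "P = {..<m} \<rightarrow>\<^sub>E J"
  define B where "B = {\<sigma> \<in> P. \<forall>t\<in>J. card {r. r < m \<and> \<sigma> r = t} \<noteq> 1}"
  define w where "w \<sigma> \<omega> = (\<Prod>r<m. g r (\<sigma> r) (Y (\<sigma> r) \<omega>))" for \<sigma> \<omega>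
  have finP: "finite P" unfolding P_def using J by (simp add: finite_PiE)
  have expand: "(\<lambda>\<omega>. \<Prod>r<m. \<Sum>t\<in>J. g r t (Y t \<omega>)) = (\<lambda>\<omega>. \<Sum>\<sigma>\<in>P. w \<sigma> \<omega>)"
    unfolding P_def w_def using J by (subst prod_sum_PiE) auto
  note meas = measurable_fun_indep_var[OF ind]
  have \<sigma>: "r < m \<Longrightarrow> \<sigma> r \<in> J" if "\<sigma> \<in> P" for \<sigma> r using that by (auto simp: P_def)
  have int_w: "integrable M (w \<sigma>)" if "\<sigma> \<in> P" for \<sigma>
    unfolding w_def[abs_def] using \<sigma>[OF that] meas int
    by (intro integrable_prod_if_power_integrable) auto
  have vanish: "expectation (w \<sigma>) = 0" if \<sigma>PB: "\<sigma> \<in> P - B" for \<sigma>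
  proof -
    have "\<sigma> \<in> {..<m} \<rightarrow> J" "\<not> (\<forall>t\<in>J. card {r. r < m \<and> \<sigma> r = t} \<noteq> 1)"
      using \<sigma>PB by (auto simp: B_def P_def)
    then obtain t0 where \<sigma>: "\<sigma> \<in> {..<m} \<rightarrow> J" and t0: "t0 \<in> J" "card {r. r < m \<and> \<sigma> r = t0} = 1"
      by blast
    then obtain r0 where fibre: "{r. r < m \<and> \<sigma> r = t0} = {r0}" by (auto simp: card_1_singleton_iff)
    then have "r0 < m" by auto
    show ?thesis unfolding w_def
      by (rule expectation_prod_eq_0_if_singleton_fibre[where g = g,
            OF ind \<sigma> t0(1) fibre mean0[OF \<open>r0 < m\<close> t0(1)] int])
  qed
  show "integrable M (\<lambda>\<omega>. \<Prod>r<m. \<Sum>t\<in>J. g r t (Y t \<omega>))"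
    unfolding expand using int_w by auto
  have "\<bar>expectation (\<lambda>\<omega>. \<Prod>r<m. \<Sum>t\<in>J. g r t (Y t \<omega>))\<bar> = \<bar>\<Sum>\<sigma>\<in>P. expectation (w \<sigma>)\<bar>"
    unfolding expand using int_w by (simp add: Bochner_Integration.integral_sum)
  also have "\<dots> = \<bar>\<Sum>\<sigma>\<in>B. expectation (w \<sigma>)\<bar>"
    using vanish finP by (intro arg_cong[where f=abs] sum.mono_neutral_right) (auto simp: B_def)
  also have "\<dots> \<le> (\<Sum>\<sigma>\<in>B. 1 + real m * K)"
  proof (intro order_trans[OF sum_abs] sum_mono)
    fix \<sigma> assume "\<sigma> \<in> B"
    then have "\<sigma> \<in> P" by (simp add: B_def)
    have "\<bar>expectation (w \<sigma>)\<bar> \<le> expectation (\<lambda>\<omega>. \<bar>w \<sigma> \<omega>\<bar>)" by (rule integral_abs_bound)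
    also have "\<dots> \<le> 1 + real m * K"
      unfolding w_def using \<sigma>[OF \<open>\<sigma> \<in> P\<close>] meas int mom K
      by (intro expectation_abs_prod_le) auto
    finally show "\<bar>expectation (w \<sigma>)\<bar> \<le> 1 + real m * K" .
  qed
  also have "\<dots> = real (card B) * (1 + real m * K)" by simp
  also have "\<dots> \<le> real (m^m * card J ^ (m div 2)) * (1 + real m * K)"
  proof (rule mult_right_mono)
    show "real (card B) \<le> real (m^m * card J ^ (m div 2))"
      unfolding B_def P_def of_nat_le_iff by (rule card_no_singleton_fibre_le[OF J])
  qed (use K in simp)
  finally show "\<bar>expectation (\<lambda>\<omega>. \<Prod>r<m. \<Sum>t\<in>J. g r t (Y t \<omega>))\<bar>
      \<le> (1 + real m * K) * (m^m * card J ^ (m div 2))" by (simp add: mult.commute)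
qed

end

section \<open>Binomial expansion of centred moments\<close>

definition centred_binomial_bound :: "nat \<Rightarrow> real \<Rightarrow> real \<Rightarrow> real \<Rightarrow> real" where
  "centred_binomial_bound p y B z =
     (\<Sum>i\<le>p. if i = 0 then y^p else if i = 1 then 0
             else real (p choose i) * \<bar>y\<bar>^(p-i) * (B * z^(i div 2)))"

lemma (in prob_space) binomial_centred_moment_le:
  fixes N :: "'a \<Rightarrow> real"
  assumes int: "\<And>i. i \<le> p \<Longrightarrow> integrable M (\<lambda>\<omega>. N \<omega> ^ i)"
    and mean0: "expectation N = 0"
    and mom: "\<And>i. 2 \<le> i \<Longrightarrow> i \<le> p \<Longrightarrow> \<bar>expectation (\<lambda>\<omega>. N \<omega> ^ i)\<bar> \<le> B * z^(i div 2)"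
  shows "integrable M (\<lambda>\<omega>. (y + N \<omega>)^p)"
    and "expectation (\<lambda>\<omega>. (y + N \<omega>)^p) \<le> centred_binomial_bound p y B z"
proof -
  have expand: "(\<lambda>\<omega>. (y + N \<omega>)^p) = (\<lambda>\<omega>. \<Sum>i\<le>p. real (p choose i) * y^(p-i) * N \<omega> ^ i)"
  proof
    fix \<omega>
    have "(y + N \<omega>)^p = (\<Sum>i\<le>p. real (p choose i) * N \<omega> ^ i * y^(p-i))"
      by (subst add.commute) (rule binomial_ring)
    then show "(y + N \<omega>)^p = (\<Sum>i\<le>p. real (p choose i) * y^(p-i) * N \<omega> ^ i)"
      by (simp add: mult_ac)
  qed
  show "integrable M (\<lambda>\<omega>. (y + N \<omega>)^p)" unfolding expand using int by auto
  have "expectation (\<lambda>\<omega>. (y + N \<omega>)^p) = (\<Sum>i\<le>p. real (p choose i) * y^(p-i) * expectation (\<lambda>\<omega>. N \<omega> ^ i))"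
    unfolding expand using int by (simp add: Bochner_Integration.integral_sum)
  also have "\<dots> \<le> centred_binomial_bound p y B z"
    unfolding centred_binomial_bound_def
  proof (rule sum_mono)
    fix i assume i: "i \<in> {..p}"
    consider "i = 0" | "i = 1" | "2 \<le> i" by linarith
    then show "real (p choose i) * y^(p-i) * expectation (\<lambda>\<omega>. N \<omega> ^ i)
        \<le> (if i = 0 then y^p else if i = 1 then 0
            else real (p choose i) * \<bar>y\<bar>^(p-i) * (B * z^(i div 2)))"
    proof cases
      case 3
      have "real (p choose i) * y^(p-i) * expectation (\<lambda>\<omega>. N \<omega> ^ i)
          \<le> \<bar>real (p choose i) * y^(p-i) * expectation (\<lambda>\<omega>. N \<omega> ^ i)\<bar>" by simp
      also have "\<dots> = real (p choose i) * \<bar>y\<bar>^(p-i) * \<bar>expectation (\<lambda>\<omega>. N \<omega> ^ i)\<bar>"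
        by (simp add: abs_mult power_abs)
      also have "\<dots> \<le> real (p choose i) * \<bar>y\<bar>^(p-i) * (B * z^(i div 2))"
        using mom[OF 3] i by (intro mult_left_mono) auto
      finally show ?thesis using 3 by simp
    qed (use mean0 in \<open>simp_all add: prob_space\<close>)
  qed
  finally show "expectation (\<lambda>\<omega>. (y + N \<omega>)^p) \<le> centred_binomial_bound p y B z" .
qed

lemma power_add_le_power_plus_lower:
  fixes z c :: real
  assumes z: "1 \<le> z" and c: "0 \<le> c"
  shows "(z + c)^p \<le> z^p + 2^p * (1 + c)^p * z^(p-1)"
proof -
  have "(z + c)^p = (\<Sum>i\<le>p. real (p choose i) * c^i * z^(p-i))"
    using binomial_ring[of c z p] by (simp add: add.commute)
  also have "\<dots> \<le> (\<Sum>i\<le>p. if i = 0 then z^p else real (p choose i) * ((1+c)^p * z^(p-1)))"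
  proof (rule sum_mono)
    fix i assume i: "i \<in> {..p}"
    show "real (p choose i) * c^i * z^(p-i)
        \<le> (if i = 0 then z^p else real (p choose i) * ((1+c)^p * z^(p-1)))"
    proof (cases "i = 0")
      case False
      have "c^i \<le> (1+c)^p" using i c power_mono[of c "1+c" i] power_increasing[of i p "1+c"] by auto
      moreover have "z^(p-i) \<le> z^(p-1)" using False z by (intro power_increasing) auto
      ultimately have "c^i * z^(p-i) \<le> (1+c)^p * z^(p-1)" using c z by (intro mult_mono) auto
      then show ?thesis using False by (simp add: mult.assoc mult_left_mono)
    qed simp
  qed
  also have "\<dots> \<le> z^p + 2^p * (1 + c)^p * z^(p-1)"
    using sum_if_zero_le[where g="\<lambda>i. real (p choose i) * ((1+c)^p * z^(p-1))" and p=p and a="z^p"] c z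
    by (simp add: sum_distrib_right[symmetric] sum_choose_real mult.assoc)
  finally show ?thesis .
qed

lemma abs_add_power_mult_power_le:
  fixes z c :: real
  assumes z: "1 \<le> z" and c: "0 \<le> c" and i: "2 \<le> i" "i \<le> p"
  shows "\<bar>z + c\<bar>^(p-i) * z^(i div 2) \<le> (1 + c)^p * z^(p-1)"
proof -
  have "\<bar>z + c\<bar>^(p-i) \<le> ((1 + c) * z)^(p-i)"
    using z c mult_left_mono[of 1 z c] by (intro power_mono) (auto simp: algebra_simps)
  also have "\<dots> \<le> (1 + c)^p * z^(p-i)"
    using c z by (simp add: power_mult_distrib mult_right_mono power_increasing)
  finally have "\<bar>z + c\<bar>^(p-i) * z^(i div 2) \<le> (1 + c)^p * z^(p - i + i div 2)"
    using z by (simp add: power_add mult.assoc mult_right_mono)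
  also have "\<dots> \<le> (1 + c)^p * z^(p-1)"
    using z c i by (intro mult_left_mono power_increasing) auto
  finally show ?thesis .
qed

lemma centred_binomial_bound_shift_le:
  fixes z c B :: real
  assumes z: "1 \<le> z" and c: "0 \<le> c" and B: "0 \<le> B"
  shows "centred_binomial_bound p (z + c) B z \<le> z^p + 2^p * (1 + c)^p * (1 + B) * z^(p-1)"
proof -
  let ?g = "\<lambda>i. real (p choose i) * ((1+c)^p * B * z^(p-1))"
  have "centred_binomial_bound p (z + c) B z \<le> (\<Sum>i\<le>p. if i = 0 then (z+c)^p else ?g i)"
    unfolding centred_binomial_bound_def
  proof (rule sum_mono)
    fix i assume i: "i \<in> {..p}"
    consider "i = 0" | "i = 1" | "2 \<le> i" by linarith
    then show "(if i = 0 then (z+c)^p else if i = 1 then 0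
              else real (p choose i) * \<bar>z+c\<bar>^(p-i) * (B * z^(i div 2)))
        \<le> (if i = 0 then (z+c)^p else ?g i)"
    proof cases
      case 3
      then have "real (p choose i) * (B * (\<bar>z+c\<bar>^(p-i) * z^(i div 2)))
          \<le> real (p choose i) * (B * ((1 + c)^p * z^(p-1)))"
        using abs_add_power_mult_power_le[OF z c] i B by (intro mult_left_mono) auto
      then show ?thesis using 3 by (simp add: algebra_simps)
    qed (use c B z in auto)
  qed
  also have "\<dots> \<le> (z+c)^p + 2^p * ((1+c)^p * B * z^(p-1))"
    using sum_if_zero_le[where g = ?g and p=p and a="(z+c)^p"] c z B
    by (simp add: sum_distrib_right[symmetric] sum_choose_real)
  also have "\<dots> \<le> z^p + 2^p * (1 + c)^p * (1 + B) * z^(p-1)"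
    using power_add_le_power_plus_lower[OF z c, of p] by (simp add: algebra_simps)
  finally show ?thesis .
qed

lemma power_mult_power_le_young:
  fixes Y z R :: real
  assumes Y: "0 \<le> Y" and z: "1 \<le> z" and R: "1 \<le> R" and h: "1 \<le> h" "h \<le> j"
  shows "Y^(j-h) * z^h \<le> R^j * z^j + Y^j / R"
proof (cases "Y \<le> R * z")
  case True
  have "Y^(j-h) * z^h \<le> (R * z)^(j-h) * z^h"
    using Y True z by (intro mult_right_mono power_mono) auto
  also have "\<dots> = R^(j-h) * z^j" using h by (simp add: power_mult_distrib power_add[symmetric])
  also have "\<dots> \<le> R^j * z^j" using R z by (intro mult_right_mono power_increasing) auto
  moreover have "0 \<le> Y^j / R" using Y R by simp
  ultimately show ?thesis by linarith
next
  case False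
  then have "z \<le> Y / R" using R by (simp add: field_simps)
  then have "z^h \<le> Y^h / R^h" using z by (metis power_divide power_mono order_trans zero_le_one)
  also have "\<dots> \<le> Y^h / R"
    using Y R h power_increasing[of 1 h R] by (intro divide_left_mono) auto
  finally have "Y^(j-h) * z^h \<le> Y^(j-h) * (Y^h / R)" using Y by (intro mult_left_mono) auto
  also have "\<dots> = Y^j / R" using h by (simp add: power_add[symmetric])
  finally have "Y^(j-h) * z^h \<le> Y^j / R" .
  moreover have "0 \<le> R^j * z^j" using R z by simp
  ultimately show ?thesis by linarith
qed

lemma abs_power_mult_power_le_young:
  fixes y z R :: real
  assumes z: "1 \<le> z" and R: "1 \<le> R" and i: "2 \<le> i" "i \<le> 2*j"
  shows "\<bar>y\<bar>^(2*j-i) * z^(i div 2) \<le> (1 + R^j) * z^j + y^(2*j) / R"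
proof -
  define h where "h = i div 2"
  have h: "1 \<le> h" "h \<le> j" "2*h \<le> i" using i unfolding h_def by auto
  have "\<bar>y\<bar>^(2*j-i) \<le> 1 + \<bar>y\<bar>^(2*(j-h))"
    using h by (intro power_abs_le_1_plus_power) auto
  also have "\<bar>y\<bar>^(2*(j-h)) = (y^2)^(j-h)"
    by (simp add: power_mult power_even_abs[symmetric] power2_eq_square)
  finally have "\<bar>y\<bar>^(2*j-i) \<le> 1 + (y^2)^(j-h)" .
  then have "\<bar>y\<bar>^(2*j-i) * z^h \<le> (1 + (y^2)^(j-h)) * z^h"
    using z by (intro mult_right_mono) auto
  then have "\<bar>y\<bar>^(2*j-i) * z^h \<le> z^h + (y^2)^(j-h) * z^h"
    by (simp add: algebra_simps)
  moreover have "z^h \<le> z^j" using z h by (intro power_increasing) auto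
  moreover have "(y^2)^(j-h) * z^h \<le> R^j * z^j + y^(2*j) / R"
    using power_mult_power_le_young[of "y^2" z R h j] z R h by (simp add: power_mult)
  ultimately show ?thesis unfolding h_def by (simp add: algebra_simps)
qed

lemma centred_binomial_bound_even_le:
  fixes y z R B :: real
  assumes z: "1 \<le> z" and R: "1 \<le> R" and B: "0 \<le> B"
  shows "centred_binomial_bound (2*j) y B z
     \<le> (1 + 4^j * B / R) * y^(2*j) + 4^j * B * (1 + R^j) * z^j"
proof -
  let ?g = "\<lambda>i. real ((2*j) choose i) * (B * ((1 + R^j) * z^j + y^(2*j) / R))"
  have y: "0 \<le> y^(2*j)" by (simp add: power_mult)
  have "centred_binomial_bound (2*j) y B z \<le> (\<Sum>i\<le>2*j. if i = 0 then y^(2*j) else ?g i)"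
    unfolding centred_binomial_bound_def
  proof (rule sum_mono)
    fix i assume i: "i \<in> {..2*j}"
    consider "i = 0" | "i = 1" | "2 \<le> i" by linarith
    then show "(if i = 0 then y^(2*j) else if i = 1 then 0
              else real ((2*j) choose i) * \<bar>y\<bar>^(2*j-i) * (B * z^(i div 2)))
        \<le> (if i = 0 then y^(2*j) else ?g i)"
    proof cases
      case 3
      then have "real ((2*j) choose i) * (B * (\<bar>y\<bar>^(2*j-i) * z^(i div 2))) \<le> ?g i"
        using abs_power_mult_power_le_young[OF z R] i B by (intro mult_left_mono) auto
      then show ?thesis using 3 by (simp add: algebra_simps)
    qed (use B R z y in auto)
  qed
  also have "\<dots> \<le> y^(2*j) + 4^j * (B * ((1 + R^j) * z^j + y^(2*j) / R))"
    using sum_if_zero_le[where g = ?g and p="2*j" and a="y^(2*j)"] B R z y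
    by (simp add: sum_distrib_right[symmetric] sum_choose_real power_mult)
  finally show ?thesis by (simp add: algebra_simps)
qed

text \<open>The affine map \<open>x \<mapsto> \<rho> x + \<delta>\<close> with \<open>\<bar>\<rho>\<bar> < 1\<close> contracts by \<open>(1 + \<bar>\<rho>\<bar>)/2\<close>
  outside a bounded set.\<close>

lemma affine_contraction_even_power_le:
  fixes \<rho> \<delta> x :: real
  assumes \<rho>: "\<bar>\<rho>\<bar> < 1"
  shows "(\<rho> * x + \<delta>)^(2*j)
    \<le> ((1 + \<bar>\<rho>\<bar>) / 2)^(2*j) * x^(2*j) + (\<bar>\<rho>\<bar> * (2 * \<bar>\<delta>\<bar> / (1 - \<bar>\<rho>\<bar>)) + \<bar>\<delta>\<bar>)^(2*j)"
proof -
  let ?T = "2 * \<bar>\<delta>\<bar> / (1 - \<bar>\<rho>\<bar>)"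
  have tri: "\<bar>\<rho> * x + \<delta>\<bar> \<le> \<bar>\<rho>\<bar> * \<bar>x\<bar> + \<bar>\<delta>\<bar>" by (metis abs_mult abs_triangle_ineq)
  have nonneg: "0 \<le> a^(2*j)" for a :: real by (simp add: power_mult)
  have even_abs: "(\<rho> * x + \<delta>)^(2*j) = \<bar>\<rho> * x + \<delta>\<bar>^(2*j)" by (simp add: power_even_abs)
  show ?thesis
  proof (cases "?T \<le> \<bar>x\<bar>")
    case True
    then have "2 * \<bar>\<delta>\<bar> \<le> \<bar>x\<bar> * (1 - \<bar>\<rho>\<bar>)" using \<rho> by (simp add: field_simps)
    then have "\<bar>\<rho> * x + \<delta>\<bar> \<le> (1 + \<bar>\<rho>\<bar>) / 2 * \<bar>x\<bar>" using tri by (simp add: field_simps)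
    then have "\<bar>\<rho> * x + \<delta>\<bar>^(2*j) \<le> ((1 + \<bar>\<rho>\<bar>) / 2 * \<bar>x\<bar>)^(2*j)" by (intro power_mono) auto
    also have "\<dots> = ((1 + \<bar>\<rho>\<bar>) / 2)^(2*j) * x^(2*j)"
      unfolding power_mult_distrib by (simp add: power_even_abs)
    finally show ?thesis
      using even_abs nonneg[of "\<bar>\<rho>\<bar> * ?T + \<bar>\<delta>\<bar>"] by linarith
  next
    case False
    then have "\<bar>\<rho> * x + \<delta>\<bar> \<le> \<bar>\<rho>\<bar> * ?T + \<bar>\<delta>\<bar>"
      using tri mult_left_mono[of "\<bar>x\<bar>" ?T "\<bar>\<rho>\<bar>"] by linarith
    then have "\<bar>\<rho> * x + \<delta>\<bar>^(2*j) \<le> (\<bar>\<rho>\<bar> * ?T + \<bar>\<delta>\<bar>)^(2*j)" by (intro power_mono) auto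
    moreover have "0 \<le> ((1 + \<bar>\<rho>\<bar>) / 2)^(2*j) * x^(2*j)" using nonneg by simp
    ultimately show ?thesis using even_abs by linarith
  qed
qed

section \<open>Representation of the process\<close>

lemma measurable_add_count_space:
  fixes f g :: "'x \<Rightarrow> 'b::{countable, plus}"
  assumes "f \<in> measurable N (count_space UNIV)" "g \<in> measurable N (count_space UNIV)"
  shows "(\<lambda>x. f x + g x) \<in> measurable N (count_space UNIV)"
proof -
  have "(\<lambda>x. (\<lambda>i x. i + g x) (f x) x) \<in> measurable N (count_space UNIV)"
  proof (rule measurable_compose_countable[OF _ assms(1)])
    fix i :: 'b
    show "(\<lambda>x. i + g x) \<in> measurable N (count_space UNIV)"
      by (rule measurable_compose[OF assms(2)]) simp
  qed
  then show ?thesis by simp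
qed

lemma measurable_sum_count_space:
  fixes f :: "'i \<Rightarrow> 'x \<Rightarrow> 'b::{countable, comm_monoid_add}"
  assumes "finite A" "\<And>a. a \<in> A \<Longrightarrow> f a \<in> measurable N (count_space UNIV)"
  shows "(\<lambda>x. \<Sum>a\<in>A. f a x) \<in> measurable N (count_space UNIV)"
  using assms
proof (induction A rule: finite_induct)
  case empty then show ?case by simp
next
  case (insert a A)
  then show ?case by (simp add: measurable_add_count_space)
qed

fun gw_time :: "gw_idx \<Rightarrow> nat" where
  "gw_time (Xi k j i) = k" | "gw_time (Eps k) = k"

definition gw_upto :: "nat \<Rightarrow> gw_idx set" where "gw_upto k = {t \<in> gw_index_set. gw_time t \<le> k}"
definition gw_gen :: "nat \<Rightarrow> gw_idx set" where "gw_gen k = {t \<in> gw_index_set. gw_time t = k}"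

definition gw_step :: "nat \<Rightarrow> nat \<times> nat \<Rightarrow> (gw_idx \<Rightarrow> nat \<times> nat) \<Rightarrow> nat \<times> nat" where
  "gw_step k v g = (\<Sum>j\<in>{1..fst v}. g (Xi k j 1)) + (\<Sum>j\<in>{1..snd v}. g (Xi k j 2)) + g (Eps k)"

fun gw_iter :: "(gw_idx \<Rightarrow> nat \<times> nat) \<Rightarrow> nat \<Rightarrow> nat \<times> nat" where
  "gw_iter g 0 = (0,0)" | "gw_iter g (Suc k) = gw_step (Suc k) (gw_iter g k) g"

lemma Xi_in_gw_index_set[simp]: "Xi k j i \<in> gw_index_set \<longleftrightarrow> 1 \<le> k \<and> 1 \<le> j \<and> i \<in> {1,2}"
  by (auto simp: gw_index_set_def)
lemma Eps_in_gw_index_set[simp]: "Eps k \<in> gw_index_set \<longleftrightarrow> 1 \<le> k"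
  by (auto simp: gw_index_set_def)

lemma gw_upto_gw_gen_disjoint: "gw_upto k \<inter> gw_gen (Suc k) = {}"
  by (auto simp: gw_upto_def gw_gen_def)

lemma measurable_gw_step:
  assumes "\<And>j i. 1 \<le> j \<Longrightarrow> i \<in> {1,2} \<Longrightarrow> Xi k j i \<in> S" "Eps k \<in> S"
  shows "gw_step k v \<in> measurable (PiM S (\<lambda>_. count_space UNIV)) (count_space UNIV)"
proof -
  have c: "\<And>t. t \<in> S \<Longrightarrow> (\<lambda>g. g t) \<in> measurable (PiM S (\<lambda>_. count_space UNIV)) (count_space UNIV)"
    by (rule measurable_component_singleton)
  show ?thesis unfolding gw_step_def
    by (intro measurable_add_count_space measurable_sum_count_space c) (use assms in auto)
qed

lemma measurable_gw_iter:
  assumes "k \<le> k0"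
  shows "(\<lambda>g. gw_iter g k) \<in> measurable (PiM (gw_upto k0) (\<lambda>_. count_space UNIV)) (count_space UNIV)"
  using assms
proof (induction k)
  case 0 show ?case by (simp only: gw_iter.simps) (rule measurable_count_space_const)
next
  case (Suc k)
  have "(\<lambda>g. (\<lambda>v g. gw_step (Suc k) v g) (gw_iter g k) g) \<in> measurable (PiM (gw_upto k0) (\<lambda>_. count_space UNIV)) (count_space UNIV)"
  proof (rule measurable_compose_countable[where f="\<lambda>v g. gw_step (Suc k) v g" and g="\<lambda>g. gw_iter g k"])
    fix v show "gw_step (Suc k) v \<in> measurable (PiM (gw_upto k0) (\<lambda>_. count_space UNIV)) (count_space UNIV)"
      by (rule measurable_gw_step) (use Suc.prems in \<open>auto simp: gw_upto_def\<close>)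
    show "(\<lambda>g. gw_iter g k) \<in> measurable (PiM (gw_upto k0) (\<lambda>_. count_space UNIV)) (count_space UNIV)"
      using Suc by simp
  qed
  then show ?case by simp
qed

lemma gw_X_eq_gw_iter:
  assumes "k \<le> k0"
  shows "gw_X \<xi> \<epsilon> k \<omega> = gw_iter (restrict (\<lambda>t. gw_family \<xi> \<epsilon> t \<omega>) (gw_upto k0)) k"
  using assms
proof (induction k)
  case 0 then show ?case by simp
next
  case (Suc k)
  let ?g = "restrict (\<lambda>t. gw_family \<xi> \<epsilon> t \<omega>) (gw_upto k0)"
  have IH: "gw_X \<xi> \<epsilon> k \<omega> = gw_iter ?g k" using Suc.IH Suc.prems by (simp only: Suc_leD)
  have a: "(\<Sum>j\<in>{1..n}. \<xi> (Suc k) j i \<omega>) = (\<Sum>j\<in>{1..n}. ?g (Xi (Suc k) j i))" if "i \<in> {1,2}" for n i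
    by (rule sum.cong) (use Suc.prems that in \<open>auto simp: gw_upto_def gw_family_def\<close>)
  have b: "\<epsilon> (Suc k) \<omega> = ?g (Eps (Suc k))" using Suc.prems by (auto simp: gw_upto_def gw_family_def)
  have a1: "(\<Sum>j\<in>{1..n}. \<xi> (Suc k) j 1 \<omega>) = (\<Sum>j\<in>{1..n}. ?g (Xi (Suc k) j 1))" for n by (rule a) simp
  have a2: "(\<Sum>j\<in>{1..n}. \<xi> (Suc k) j 2 \<omega>) = (\<Sum>j\<in>{1..n}. ?g (Xi (Suc k) j 2))" for n by (rule a) simp
  have "gw_X \<xi> \<epsilon> (Suc k) \<omega> = gw_step (Suc k) (gw_X \<xi> \<epsilon> k \<omega>) ?g"
    by (simp only: gw_X.simps gw_step_def a1 a2 b)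
  then show ?case by (simp only: IH gw_iter.simps)
qed

lemma gw_step_restrict_gen:
  "gw_step (Suc k) v (restrict (\<lambda>t. gw_family \<xi> \<epsilon> t \<omega>) (gw_gen (Suc k)))
   = (\<Sum>j\<in>{1..fst v}. \<xi> (Suc k) j 1 \<omega>) + (\<Sum>j\<in>{1..snd v}. \<xi> (Suc k) j 2 \<omega>) + \<epsilon> (Suc k) \<omega>"
  unfolding gw_step_def by (intro arg_cong2[where f="(+)"] sum.cong) (auto simp: gw_gen_def gw_family_def)

lemma gw_X_Suc_eq_gw_step:
  "gw_X \<xi> \<epsilon> (Suc k) \<omega> = gw_step (Suc k) (gw_X \<xi> \<epsilon> k \<omega>) (restrict (\<lambda>t. gw_family \<xi> \<epsilon> t \<omega>) (gw_gen (Suc k)))"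
  by (simp add: gw_step_restrict_gen)

definition gw_step_indices :: "nat \<Rightarrow> nat \<times> nat \<Rightarrow> gw_idx set" where
  "gw_step_indices k v = (\<lambda>j. Xi k j 1) ` {1..fst v} \<union> (\<lambda>j. Xi k j 2) ` {1..snd v} \<union> {Eps k}"

lemma gw_step_indices_subset: "1 \<le> k \<Longrightarrow> gw_step_indices k v \<subseteq> gw_index_set"
  by (auto simp: gw_step_indices_def)

lemma finite_gw_step_indices: "finite (gw_step_indices k v)" by (simp add: gw_step_indices_def)

lemma sum_gw_step_indices:
  "(\<Sum>t\<in>gw_step_indices k v. f t) = (\<Sum>j\<in>{1..fst v}. f (Xi k j 1)) + (\<Sum>j\<in>{1..snd v}. f (Xi k j 2)) + f (Eps k)"
proof -
  have d1: "(\<lambda>j. Xi k j 1) ` {1..fst v} \<inter> (\<lambda>j. Xi k j 2) ` {1..snd v} = {}" by auto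
  have d2: "((\<lambda>j. Xi k j 1) ` {1..fst v} \<union> (\<lambda>j. Xi k j 2) ` {1..snd v}) \<inter> {Eps k} = {}" by auto
  have i1: "inj_on (\<lambda>j. Xi k j 1) {1..fst v}" by (auto simp: inj_on_def)
  have i2: "inj_on (\<lambda>j. Xi k j 2) {1..snd v}" by (auto simp: inj_on_def)
  let ?A1 = "(\<lambda>j. Xi k j 1) ` {1..fst v}" and ?A2 = "(\<lambda>j. Xi k j 2) ` {1..snd v}"
  have s1: "(\<Sum>t\<in>(?A1 \<union> ?A2) \<union> {Eps k}. f t) = (\<Sum>t\<in>?A1 \<union> ?A2. f t) + (\<Sum>t\<in>{Eps k}. f t)"
    by (rule sum.union_disjoint[OF _ _ d2]) auto
  have s2: "(\<Sum>t\<in>?A1 \<union> ?A2. f t) = (\<Sum>t\<in>?A1. f t) + (\<Sum>t\<in>?A2. f t)"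
    by (rule sum.union_disjoint[OF _ _ d1]) auto
  have s3: "(\<Sum>t\<in>?A1. f t) = (\<Sum>j\<in>{1..fst v}. f (Xi k j 1))"
    using sum.reindex[OF i1, of f] by (simp add: comp_def)
  have s4: "(\<Sum>t\<in>?A2. f t) = (\<Sum>j\<in>{1..snd v}. f (Xi k j 2))"
    using sum.reindex[OF i2, of f] by (simp add: comp_def)
  show ?thesis unfolding gw_step_indices_def s1 s2 s3 s4 by simp
qed

lemma card_gw_step_indices: "card (gw_step_indices k v) = fst v + snd v + 1"
  using sum_gw_step_indices[of "\<lambda>_. (1::nat)" k v] by simp

text \<open>\<open>X (Suc k)\<close> is a function of \<open>X k\<close> and of the variables of generation \<open>Suc k\<close>, which are
  independent of all earlier ones; integrals of functions of \<open>(X k, X (Suc k))\<close> can therefore be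
  computed by first integrating over generation \<open>Suc k\<close> with \<open>X k\<close> frozen.\<close>

locale gw_process = prob_space M for M :: "'a measure" +
  fixes \<xi> :: "nat \<Rightarrow> nat \<Rightarrow> nat \<Rightarrow> 'a \<Rightarrow> nat \<times> nat" and \<epsilon> :: "nat \<Rightarrow> 'a \<Rightarrow> nat \<times> nat"
  assumes indep: "indep_vars (\<lambda>_. count_space UNIV) (gw_family \<xi> \<epsilon>) gw_index_set"
begin

abbreviation "Y \<equiv> gw_family \<xi> \<epsilon>"
abbreviation "X \<equiv> gw_X \<xi> \<epsilon>"
definition "gen_vars k \<omega> = restrict (\<lambda>t. Y t \<omega>) (gw_gen k)"

abbreviation "PGen k \<equiv> PiM (gw_gen k) (\<lambda>_. count_space UNIV :: (nat \<times> nat) measure)"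

lemma measurable_Y: "t \<in> gw_index_set \<Longrightarrow> Y t \<in> measurable M (count_space UNIV)"
  using indep by (auto simp: indep_vars_def)

lemma measurable_X: "X k \<in> measurable M (count_space UNIV)"
proof -
  have "(\<lambda>\<omega>. (\<lambda>g. gw_iter g k) (restrict (\<lambda>t. Y t \<omega>) (gw_upto k))) \<in> measurable M (count_space UNIV)"
    by (rule measurable_compose[OF measurable_restrict measurable_gw_iter]) (auto simp: gw_upto_def intro: measurable_Y)
  moreover have "X k = (\<lambda>\<omega>. (\<lambda>g. gw_iter g k) (restrict (\<lambda>t. Y t \<omega>) (gw_upto k)))"
    by (rule ext) (simp only: gw_X_eq_gw_iter[OF order_refl])
  ultimately show ?thesis by simp
qed

lemma measurable_gen_vars: "gen_vars k \<in> measurable M (PGen k)"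
  unfolding gen_vars_def by (rule measurable_restrict) (auto simp: gw_gen_def intro: measurable_Y)

definition "past_vars k \<omega> = restrict (\<lambda>t. Y t \<omega>) (gw_upto k)"
abbreviation "PPast k \<equiv> PiM (gw_upto k) (\<lambda>_. count_space UNIV :: (nat \<times> nat) measure)"

lemma measurable_past_vars: "past_vars k \<in> measurable M (PPast k)"
  unfolding past_vars_def by (rule measurable_restrict) (auto simp: gw_upto_def intro: measurable_Y)

lemma X_eq_gw_iter_past: "X k \<omega> = gw_iter (past_vars k \<omega>) k"
  unfolding past_vars_def by (rule gw_X_eq_gw_iter) simp

lemma indep_past_gen_vars: "indep_var (PPast k) (past_vars k) (PGen (Suc k)) (gen_vars (Suc k))"
  unfolding past_vars_def gen_vars_def
  by (rule indep_var_restrict[OF indep gw_upto_gw_gen_disjoint]) (auto simp: gw_upto_def gw_gen_def)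

lemma X_Suc_eq: "X (Suc k) \<omega> = gw_step (Suc k) (X k \<omega>) (gen_vars (Suc k) \<omega>)"
  unfolding gen_vars_def by (rule gw_X_Suc_eq_gw_step)

lemma measurable_gw_step_gen: "gw_step (Suc k) v \<in> measurable (PGen (Suc k)) (count_space UNIV)"
  by (rule measurable_gw_step) (auto simp: gw_gen_def)

lemma distr_past_gen_vars_eq_product:
  "distr M (PPast k) (past_vars k) \<Otimes>\<^sub>M distr M (PGen (Suc k)) (gen_vars (Suc k))
    = distr M (PPast k \<Otimes>\<^sub>M PGen (Suc k)) (\<lambda>\<omega>. (past_vars k \<omega>, gen_vars (Suc k) \<omega>))"
  using indep_past_gen_vars[of k] unfolding indep_var_distribution_eq by blast

lemma measurable_gw_iter_gw_step:
  assumes F: "\<And>v. F v \<in> measurable (count_space UNIV) N"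
  shows "(\<lambda>p. F (gw_iter (fst p) k) (gw_step (Suc k) (gw_iter (fst p) k) (snd p)))
    \<in> measurable (PPast k \<Otimes>\<^sub>M PGen (Suc k)) N"
proof -
  have step: "(\<lambda>p. F (fst p) (gw_step (Suc k) (fst p) (snd p))) \<in> measurable (count_space UNIV \<Otimes>\<^sub>M PGen (Suc k)) N"
    by (rule measurable_pair_measure_countable1)
       (simp_all add: measurable_compose[OF measurable_gw_step_gen F])
  have iter: "(\<lambda>p. (gw_iter (fst p) k, snd p))
      \<in> measurable (PPast k \<Otimes>\<^sub>M PGen (Suc k)) (count_space UNIV \<Otimes>\<^sub>M PGen (Suc k))"
    by (intro measurable_Pair measurable_compose[OF measurable_fst measurable_gw_iter] measurable_snd) simp
  from measurable_compose[OF iter step] show ?thesis by simp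
qed

lemma nn_integral_X_Suc_eq:
  fixes F :: "nat \<times> nat \<Rightarrow> nat \<times> nat \<Rightarrow> ennreal"
  shows "(\<integral>\<^sup>+\<omega>. F (X k \<omega>) (X (Suc k) \<omega>) \<partial>M)
       = (\<integral>\<^sup>+\<omega>. (\<integral>\<^sup>+\<omega>'. F (X k \<omega>) (gw_step (Suc k) (X k \<omega>) (gen_vars (Suc k) \<omega>')) \<partial>M) \<partial>M)"
proof -
  let ?DX = "distr M (PPast k) (past_vars k)"
  let ?DW = "distr M (PGen (Suc k)) (gen_vars (Suc k))"
  let ?H = "\<lambda>p. F (gw_iter (fst p) k) (gw_step (Suc k) (gw_iter (fst p) k) (snd p))"
  have Hm: "?H \<in> borel_measurable (PPast k \<Otimes>\<^sub>M PGen (Suc k))"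
    by (rule measurable_gw_iter_gw_step) simp
  interpret DW: prob_space ?DW by (rule prob_space_distr[OF measurable_gen_vars])
  have pm: "(\<lambda>\<omega>. (past_vars k \<omega>, gen_vars (Suc k) \<omega>)) \<in> measurable M (PPast k \<Otimes>\<^sub>M PGen (Suc k))"
    by (auto intro!: measurable_Pair measurable_past_vars measurable_gen_vars)
  have "(\<integral>\<^sup>+\<omega>. F (X k \<omega>) (X (Suc k) \<omega>) \<partial>M) = (\<integral>\<^sup>+\<omega>. ?H (past_vars k \<omega>, gen_vars (Suc k) \<omega>) \<partial>M)"
    by (simp only: X_Suc_eq) (simp only: X_eq_gw_iter_past fst_conv snd_conv)
  also have "\<dots> = integral\<^sup>N (distr M (PPast k \<Otimes>\<^sub>M PGen (Suc k)) (\<lambda>\<omega>. (past_vars k \<omega>, gen_vars (Suc k) \<omega>))) ?H"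
    by (rule nn_integral_distr[symmetric, OF pm]) (use Hm in simp)
  also have "\<dots> = integral\<^sup>N (?DX \<Otimes>\<^sub>M ?DW) ?H" by (simp only: distr_past_gen_vars_eq_product)
  also have "\<dots> = (\<integral>\<^sup>+x. \<integral>\<^sup>+y. ?H (x, y) \<partial>?DW \<partial>?DX)"
    by (rule DW.nn_integral_fst[symmetric]) (use Hm in simp)
  also have "\<dots> = (\<integral>\<^sup>+x. \<integral>\<^sup>+\<omega>'. ?H (x, gen_vars (Suc k) \<omega>') \<partial>M \<partial>?DX)"
  proof (rule nn_integral_cong)
    fix x show "(\<integral>\<^sup>+y. ?H (x, y) \<partial>?DW) = (\<integral>\<^sup>+\<omega>'. ?H (x, gen_vars (Suc k) \<omega>') \<partial>M)"
      by (rule nn_integral_distr[OF measurable_gen_vars]) (simp only: fst_conv snd_conv measurable_distr_eq1, rule measurable_compose[OF measurable_gw_step_gen], simp)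
  qed
  also have "\<dots> = (\<integral>\<^sup>+\<omega>. \<integral>\<^sup>+\<omega>'. ?H (past_vars k \<omega>, gen_vars (Suc k) \<omega>') \<partial>M \<partial>M)"
  proof (rule nn_integral_distr[OF measurable_past_vars])
    show "(\<lambda>x. \<integral>\<^sup>+\<omega>'. ?H (x, gen_vars (Suc k) \<omega>') \<partial>M) \<in> borel_measurable ?DX"
    proof -
      have "(\<lambda>x. (\<lambda>v. \<integral>\<^sup>+\<omega>'. F v (gw_step (Suc k) v (gen_vars (Suc k) \<omega>')) \<partial>M) (gw_iter x k)) \<in> borel_measurable (PPast k)"
        by (rule measurable_compose[OF measurable_gw_iter]) auto
      then show ?thesis by simp
    qed
  qed
  finally show ?thesis by (simp add: X_eq_gw_iter_past)
qed

lemma integral_X_Suc_eq: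
  fixes F :: "nat \<times> nat \<Rightarrow> nat \<times> nat \<Rightarrow> real"
  assumes int: "integrable M (\<lambda>\<omega>. F (X k \<omega>) (X (Suc k) \<omega>))"
  shows "(\<integral>\<omega>. F (X k \<omega>) (X (Suc k) \<omega>) \<partial>M)
       = (\<integral>\<omega>. (\<integral>\<omega>'. F (X k \<omega>) (gw_step (Suc k) (X k \<omega>) (gen_vars (Suc k) \<omega>')) \<partial>M) \<partial>M)"
proof -
  let ?DX = "distr M (PPast k) (past_vars k)"
  let ?DW = "distr M (PGen (Suc k)) (gen_vars (Suc k))"
  let ?P = "distr M (PPast k \<Otimes>\<^sub>M PGen (Suc k)) (\<lambda>\<omega>. (past_vars k \<omega>, gen_vars (Suc k) \<omega>))"
  let ?H = "\<lambda>p. F (gw_iter (fst p) k) (gw_step (Suc k) (gw_iter (fst p) k) (snd p))"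
  have Hm: "?H \<in> borel_measurable (PPast k \<Otimes>\<^sub>M PGen (Suc k))"
    by (rule measurable_gw_iter_gw_step) simp
  interpret DW: prob_space ?DW by (rule prob_space_distr[OF measurable_gen_vars])
  interpret DX: prob_space ?DX by (rule prob_space_distr[OF measurable_past_vars])
  interpret PSF: pair_sigma_finite ?DX ?DW ..
  have pm: "(\<lambda>\<omega>. (past_vars k \<omega>, gen_vars (Suc k) \<omega>)) \<in> measurable M (PPast k \<Otimes>\<^sub>M PGen (Suc k))"
    by (auto intro!: measurable_Pair measurable_past_vars measurable_gen_vars)
  have intP: "integrable ?P ?H"
    using int by (subst integrable_distr_eq[OF pm Hm]) (simp only: X_Suc_eq, simp only: X_eq_gw_iter_past fst_conv snd_conv)
  have "(\<integral>\<omega>. F (X k \<omega>) (X (Suc k) \<omega>) \<partial>M) = (\<integral>\<omega>. ?H (past_vars k \<omega>, gen_vars (Suc k) \<omega>) \<partial>M)"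
    by (simp only: X_Suc_eq) (simp only: X_eq_gw_iter_past fst_conv snd_conv)
  also have "\<dots> = integral\<^sup>L ?P ?H"
    by (rule integral_distr[symmetric, OF pm]) (use Hm in simp)
  also have "\<dots> = integral\<^sup>L (?DX \<Otimes>\<^sub>M ?DW) ?H" by (simp only: distr_past_gen_vars_eq_product)
  also have "\<dots> = (\<integral>x. \<integral>y. ?H (x, y) \<partial>?DW \<partial>?DX)"
    by (rule PSF.integral_fst'[symmetric]) (use intP in \<open>simp only: distr_past_gen_vars_eq_product\<close>)
  also have "\<dots> = (\<integral>x. \<integral>\<omega>'. ?H (x, gen_vars (Suc k) \<omega>') \<partial>M \<partial>?DX)"
  proof (rule Bochner_Integration.integral_cong[OF refl])
    fix x show "(\<integral>y. ?H (x, y) \<partial>?DW) = (\<integral>\<omega>'. ?H (x, gen_vars (Suc k) \<omega>') \<partial>M)"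
      by (rule integral_distr[OF measurable_gen_vars]) (simp only: fst_conv snd_conv measurable_distr_eq1, rule measurable_compose[OF measurable_gw_step_gen], simp)
  qed
  also have "\<dots> = (\<integral>\<omega>. \<integral>\<omega>'. ?H (past_vars k \<omega>, gen_vars (Suc k) \<omega>') \<partial>M \<partial>M)"
  proof (rule integral_distr[OF measurable_past_vars])
    have "(\<lambda>x. (\<lambda>v. \<integral>\<omega>'. F v (gw_step (Suc k) v (gen_vars (Suc k) \<omega>')) \<partial>M) (gw_iter x k)) \<in> borel_measurable (PPast k)"
      by (rule measurable_compose[OF measurable_gw_iter]) auto
    then show "(\<lambda>x. \<integral>\<omega>'. ?H (x, gen_vars (Suc k) \<omega>') \<partial>M) \<in> borel_measurable (PPast k)" by simp
  qed
  finally show ?thesis by (simp add: X_eq_gw_iter_past)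
qed

lemma measurable_X_X_Suc: "(\<lambda>\<omega>. F (X k \<omega>) (X (Suc k) \<omega>) :: real) \<in> borel_measurable M"
proof -
  have "(\<lambda>\<omega>. (\<lambda>v \<omega>. F v (X (Suc k) \<omega>)) (X k \<omega>) \<omega>) \<in> borel_measurable M"
  proof (rule measurable_compose_countable[where f="\<lambda>v \<omega>. F v (X (Suc k) \<omega>)" and g="X k"])
    fix v :: "nat \<times> nat"
    show "(\<lambda>\<omega>. F v (X (Suc k) \<omega>)) \<in> borel_measurable M" by (rule measurable_compose[OF measurable_X]) simp
  qed (rule measurable_X)
  then show ?thesis by simp
qed

lemma measurable_X_fun: "(\<lambda>\<omega>. F (X k \<omega>) :: real) \<in> borel_measurable M"
  by (rule measurable_compose[OF measurable_X]) simp

lemma X_Suc_expectation_le: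
  fixes F :: "nat \<times> nat \<Rightarrow> nat \<times> nat \<Rightarrow> real" and Bd :: "nat \<times> nat \<Rightarrow> real"
  assumes F0: "\<And>v w. 0 \<le> F v w"
    and intv: "\<And>v. integrable M (\<lambda>\<omega>. F v (gw_step (Suc k) v (gen_vars (Suc k) \<omega>)))"
    and bnd: "\<And>v. expectation (\<lambda>\<omega>. F v (gw_step (Suc k) v (gen_vars (Suc k) \<omega>))) \<le> Bd v"
    and intB: "integrable M (\<lambda>\<omega>. Bd (X k \<omega>))"
  shows "integrable M (\<lambda>\<omega>. F (X k \<omega>) (X (Suc k) \<omega>))"
    and "expectation (\<lambda>\<omega>. F (X k \<omega>) (X (Suc k) \<omega>)) \<le> expectation (\<lambda>\<omega>. Bd (X k \<omega>))"
proof -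
  have Bd0: "0 \<le> Bd v" for v
  proof -
    have "0 \<le> expectation (\<lambda>\<omega>. F v (gw_step (Suc k) v (gen_vars (Suc k) \<omega>)))" by (intro integral_nonneg_AE) (simp add: F0)
    also have "\<dots> \<le> Bd v" by (rule bnd)
    finally show ?thesis .
  qed
  have "(\<integral>\<^sup>+\<omega>. ennreal (F (X k \<omega>) (X (Suc k) \<omega>)) \<partial>M)
       = (\<integral>\<^sup>+\<omega>. (\<integral>\<^sup>+\<omega>'. ennreal (F (X k \<omega>) (gw_step (Suc k) (X k \<omega>) (gen_vars (Suc k) \<omega>'))) \<partial>M) \<partial>M)"
    by (rule nn_integral_X_Suc_eq[where F="\<lambda>v w. ennreal (F v w)"])
  also have "\<dots> = (\<integral>\<^sup>+\<omega>. ennreal (expectation (\<lambda>\<omega>'. F (X k \<omega>) (gw_step (Suc k) (X k \<omega>) (gen_vars (Suc k) \<omega>')))) \<partial>M)"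
    by (intro nn_integral_cong nn_integral_eq_integral intv) (simp add: F0)
  also have "\<dots> \<le> (\<integral>\<^sup>+\<omega>. ennreal (Bd (X k \<omega>)) \<partial>M)"
    by (intro nn_integral_mono ennreal_leI bnd)
  also have "\<dots> = ennreal (expectation (\<lambda>\<omega>. Bd (X k \<omega>)))"
    by (intro nn_integral_eq_integral intB) (simp add: Bd0)
  finally have le: "(\<integral>\<^sup>+\<omega>. ennreal (F (X k \<omega>) (X (Suc k) \<omega>)) \<partial>M) \<le> ennreal (expectation (\<lambda>\<omega>. Bd (X k \<omega>)))" .
  show int: "integrable M (\<lambda>\<omega>. F (X k \<omega>) (X (Suc k) \<omega>))"
  proof (rule integrableI_bounded)
    show "(\<lambda>\<omega>. F (X k \<omega>) (X (Suc k) \<omega>)) \<in> borel_measurable M" by (rule measurable_X_X_Suc)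
    have "(\<integral>\<^sup>+\<omega>. ennreal (norm (F (X k \<omega>) (X (Suc k) \<omega>))) \<partial>M) = (\<integral>\<^sup>+\<omega>. ennreal (F (X k \<omega>) (X (Suc k) \<omega>)) \<partial>M)"
      by (simp add: F0)
    also have "\<dots> < \<infinity>" using le by (simp add: order_le_less_trans)
    finally show "(\<integral>\<^sup>+\<omega>. ennreal (norm (F (X k \<omega>) (X (Suc k) \<omega>))) \<partial>M) < \<infinity>" .
  qed
  have "ennreal (expectation (\<lambda>\<omega>. F (X k \<omega>) (X (Suc k) \<omega>))) = (\<integral>\<^sup>+\<omega>. ennreal (F (X k \<omega>) (X (Suc k) \<omega>)) \<partial>M)"
    by (rule nn_integral_eq_integral[symmetric, OF int]) (simp add: F0)
  with le have "ennreal (expectation (\<lambda>\<omega>. F (X k \<omega>) (X (Suc k) \<omega>))) \<le> ennreal (expectation (\<lambda>\<omega>. Bd (X k \<omega>)))" by simp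
  moreover have "0 \<le> expectation (\<lambda>\<omega>. Bd (X k \<omega>))" by (intro integral_nonneg_AE) (simp add: Bd0)
  ultimately show "expectation (\<lambda>\<omega>. F (X k \<omega>) (X (Suc k) \<omega>)) \<le> expectation (\<lambda>\<omega>. Bd (X k \<omega>))"
    by (simp add: ennreal_le_iff)
qed

end

section \<open>The doubly symmetric process\<close>

definition lin_comb :: "real \<times> real \<Rightarrow> nat \<times> nat \<Rightarrow> real" where
  "lin_comb c p = fst c * real (fst p) + snd c * real (snd p)"

lemma lin_comb_add: "lin_comb c (p + q) = lin_comb c p + lin_comb c q"
  by (simp add: lin_comb_def algebra_simps)

lemma lin_comb_sum: "lin_comb c (\<Sum>x\<in>A. f x) = (\<Sum>x\<in>A. lin_comb c (f x))"
  by (simp add: lin_comb_def fst_sum snd_sum sum_distrib_left sum.distrib)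

lemma abs_lin_comb_le_fst_plus_snd:
  assumes "\<bar>fst c\<bar> \<le> 1" "\<bar>snd c\<bar> \<le> 1"
  shows "\<bar>lin_comb c p\<bar> \<le> real (fst p) + real (snd p)"
proof -
  have "\<bar>lin_comb c p\<bar> \<le> \<bar>fst c\<bar> * real (fst p) + \<bar>snd c\<bar> * real (snd p)"
    unfolding lin_comb_def by (metis abs_mult abs_of_nat abs_triangle_ineq)
  also have "\<dots> \<le> real (fst p) + real (snd p)"
    using assms by (intro add_mono mult_left_le_one_le) auto
  finally show ?thesis .
qed

lemma abs_lin_comb_le_norm:
  assumes "\<bar>fst c\<bar> \<le> 1" "\<bar>snd c\<bar> \<le> 1"
  shows "\<bar>lin_comb c p\<bar> \<le> 2 * norm (vec_real p)"
proof -
  have "real (fst p) \<le> norm (vec_real p)" "real (snd p) \<le> norm (vec_real p)"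
    using norm_fst_le[of "real (fst p)" "real (snd p)"] norm_snd_le[of "real (snd p)" "real (fst p)"]
    by (simp_all add: vec_real_def)
  then show ?thesis using abs_lin_comb_le_fst_plus_snd[OF assms, of p] by linarith
qed

locale gw_doubly_symmetric = gw_process +
  fixes \<alpha> \<beta> :: real and l :: nat
  assumes ident_xi: "\<And>k j i. 1 \<le> k \<Longrightarrow> 1 \<le> j \<Longrightarrow> i \<in> {1,2} \<Longrightarrow>
                     distr M (count_space UNIV) (\<xi> k j i) = distr M (count_space UNIV) (\<xi> 1 1 i)"
    and ident_eps: "\<And>k. 1 \<le> k \<Longrightarrow>
                     distr M (count_space UNIV) (\<epsilon> k) = distr M (count_space UNIV) (\<epsilon> 1)"
    and alpha: "0 < \<alpha>" "\<alpha> < 1" and beta: "0 < \<beta>" "\<beta> < 1" and alphabeta: "\<alpha> + \<beta> = 1"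
    and mean1: "expectation (\<lambda>\<omega>. real (fst (\<xi> 1 1 1 \<omega>))) = \<alpha>"
               "expectation (\<lambda>\<omega>. real (snd (\<xi> 1 1 1 \<omega>))) = \<beta>"
    and mean2: "expectation (\<lambda>\<omega>. real (fst (\<xi> 1 1 2 \<omega>))) = \<beta>"
               "expectation (\<lambda>\<omega>. real (snd (\<xi> 1 1 2 \<omega>))) = \<alpha>"
    and l_pos: "1 \<le> l"
    and mom: "integrable M (\<lambda>\<omega>. norm (vec_real (\<xi> 1 1 1 \<omega>)) ^ l)"
             "integrable M (\<lambda>\<omega>. norm (vec_real (\<xi> 1 1 2 \<omega>)) ^ l)"
             "integrable M (\<lambda>\<omega>. norm (vec_real (\<epsilon> 1 \<omega>)) ^ l)"
begin

definition "prototype t = (case t of Xi k j i \<Rightarrow> \<xi> 1 1 i | Eps k \<Rightarrow> \<epsilon> 1)"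
definition "m\<epsilon>1 = expectation (\<lambda>\<omega>. real (fst (\<epsilon> 1 \<omega>)))"
definition "m\<epsilon>2 = expectation (\<lambda>\<omega>. real (snd (\<epsilon> 1 \<omega>)))"
definition "mean_bound = 1 + \<alpha> + \<beta> + \<bar>m\<epsilon>1\<bar> + \<bar>m\<epsilon>2\<bar>"
definition "centred_moment_const = 1 + 2^l * mean_bound^l + 4^l *
   (expectation (\<lambda>\<omega>. norm (vec_real (\<xi> 1 1 1 \<omega>)) ^ l)
    + expectation (\<lambda>\<omega>. norm (vec_real (\<xi> 1 1 2 \<omega>)) ^ l)
    + expectation (\<lambda>\<omega>. norm (vec_real (\<epsilon> 1 \<omega>)) ^ l))"

lemma Y_Xi: "Y (Xi k j i) = \<xi> k j i" and Y_Eps: "Y (Eps k) = \<epsilon> k"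
  by (simp_all add: gw_family_def fun_eq_iff)

lemma measurable_prototype: "t \<in> gw_index_set \<Longrightarrow> prototype t \<in> measurable M (count_space UNIV)"
  by (cases t) (auto simp: prototype_def Y_Xi[symmetric] Y_Eps[symmetric] intro!: measurable_Y)

lemma distr_Y_eq_prototype:
  assumes "t \<in> gw_index_set"
  shows "distr M (count_space UNIV) (Y t) = distr M (count_space UNIV) (prototype t)"
proof (cases t)
  case (Xi k j i)
  then show ?thesis
    using assms by (simp only: Y_Xi prototype_def gw_idx.case) (rule ident_xi, auto)
next
  case (Eps k)
  then show ?thesis
    using assms by (simp only: Y_Eps prototype_def gw_idx.case) (rule ident_eps, auto)
qed

lemma
  fixes h :: "nat \<times> nat \<Rightarrow> real"
  assumes t: "t \<in> gw_index_set"
  shows integrable_Y_iff_prototype: "integrable M (\<lambda>\<omega>. h (Y t \<omega>)) \<longleftrightarrow> integrable M (\<lambda>\<omega>. h (prototype t \<omega>))"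
    and expectation_Y_eq_prototype: "expectation (\<lambda>\<omega>. h (Y t \<omega>)) = expectation (\<lambda>\<omega>. h (prototype t \<omega>))"
proof -
  have Y: "Y t \<in> measurable M (count_space UNIV)" and P: "prototype t \<in> measurable M (count_space UNIV)"
    using t by (simp_all add: measurable_Y measurable_prototype)
  show "integrable M (\<lambda>\<omega>. h (Y t \<omega>)) \<longleftrightarrow> integrable M (\<lambda>\<omega>. h (prototype t \<omega>))"
    using integrable_distr_eq[OF Y, of h] integrable_distr_eq[OF P, of h] distr_Y_eq_prototype[OF t]
    by simp
  show "expectation (\<lambda>\<omega>. h (Y t \<omega>)) = expectation (\<lambda>\<omega>. h (prototype t \<omega>))"
    using integral_distr[OF Y, of h] integral_distr[OF P, of h] distr_Y_eq_prototype[OF t]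
    by simp
qed

lemma prototype_moment:
  assumes "t \<in> gw_index_set"
  shows "integrable M (\<lambda>\<omega>. norm (vec_real (prototype t \<omega>)) ^ l)"
    and "4^l * expectation (\<lambda>\<omega>. norm (vec_real (prototype t \<omega>)) ^ l)
         \<le> centred_moment_const - 1 - 2^l * mean_bound^l"
proof -
  have nonneg: "0 \<le> expectation (\<lambda>\<omega>. norm (vec_real (f \<omega>)) ^ l)" for f :: "'a \<Rightarrow> nat \<times> nat"
    by (intro integral_nonneg_AE) auto
  have "i = 1 \<or> i = 2" if "t = Xi k j i" for k j i using assms that by auto
  then show "integrable M (\<lambda>\<omega>. norm (vec_real (prototype t \<omega>)) ^ l)"
    using mom by (cases t) (auto simp: prototype_def)
  show "4^l * expectation (\<lambda>\<omega>. norm (vec_real (prototype t \<omega>)) ^ l)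
      \<le> centred_moment_const - 1 - 2^l * mean_bound^l"
    using \<open>\<And>k j i. t = Xi k j i \<Longrightarrow> i = 1 \<or> i = 2\<close> nonneg[of "\<xi> 1 1 1"] nonneg[of "\<xi> 1 1 2"]
      nonneg[of "\<epsilon> 1"]
    by (cases t) (auto simp: prototype_def centred_moment_const_def)
qed

lemma mean_bound_ge_1: "1 \<le> mean_bound"
  using alpha beta by (simp add: mean_bound_def)

lemma centred_moment_const_ge_1: "1 \<le> centred_moment_const"
proof -
  have "0 \<le> 4^l * expectation (\<lambda>\<omega>. norm (vec_real (prototype (Eps 1) \<omega>)) ^ l)"
    by (simp add: integral_nonneg_AE)
  moreover have "0 \<le> 2^l * mean_bound^l" using mean_bound_ge_1 by simp
  moreover have "4^l * expectation (\<lambda>\<omega>. norm (vec_real (prototype (Eps 1) \<omega>)) ^ l)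
      \<le> centred_moment_const - 1 - 2^l * mean_bound^l"
    by (rule prototype_moment(2)) simp
  ultimately show ?thesis by linarith
qed

lemma centred_lin_comb_moment:
  assumes t: "t \<in> gw_index_set" and c: "\<bar>fst c\<bar> \<le> 1" "\<bar>snd c\<bar> \<le> 1"
    and \<mu>: "\<bar>\<mu>\<bar> \<le> mean_bound" and i: "i \<le> l"
  shows "integrable M (\<lambda>\<omega>. \<bar>lin_comb c (Y t \<omega>) - \<mu>\<bar>^i)"
    and "expectation (\<lambda>\<omega>. \<bar>lin_comb c (Y t \<omega>) - \<mu>\<bar>^i) \<le> centred_moment_const"
proof -
  let ?N = "\<lambda>\<omega>. norm (vec_real (prototype t \<omega>))"
  let ?B = "\<lambda>\<omega>. 1 + 2^l * mean_bound^l + 4^l * ?N \<omega> ^ l"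
  have B: "\<bar>lin_comb c (prototype t \<omega>) - \<mu>\<bar>^i \<le> ?B \<omega>" for \<omega>
  proof -
    have "\<bar>lin_comb c (prototype t \<omega>) - \<mu>\<bar> \<le> 2 * ?N \<omega> + mean_bound"
      using abs_lin_comb_le_norm[OF c, of "prototype t \<omega>"] \<mu> by linarith
    then have "\<bar>lin_comb c (prototype t \<omega>) - \<mu>\<bar>^l \<le> (2 * ?N \<omega> + mean_bound)^l"
      by (intro power_mono) auto
    also have "\<dots> \<le> 2^l * ((2 * ?N \<omega>)^l + mean_bound^l)"
      using mean_bound_ge_1 by (intro power_add_le_2_power) auto
    also have "\<dots> = 2^l * mean_bound^l + 4^l * ?N \<omega> ^ l"
      by (simp add: power_mult_distrib algebra_simps flip: power_mult_distrib[of 2 2])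
    finally show ?thesis
      using power_abs_le_1_plus_power[OF i, of "lin_comb c (prototype t \<omega>) - \<mu>"] by linarith
  qed
  have int_B: "integrable M ?B" using prototype_moment(1)[OF t] by simp
  have int: "integrable M (\<lambda>\<omega>. \<bar>lin_comb c (prototype t \<omega>) - \<mu>\<bar>^i)"
    by (rule Bochner_Integration.integrable_bound[OF int_B])
       (auto intro!: AE_I2 order_trans[OF _ abs_ge_self] B measurable_compose[OF measurable_prototype[OF t]])
  then show "integrable M (\<lambda>\<omega>. \<bar>lin_comb c (Y t \<omega>) - \<mu>\<bar>^i)"
    using integrable_Y_iff_prototype[OF t, of "\<lambda>p. \<bar>lin_comb c p - \<mu>\<bar>^i"] by simp
  have "expectation (\<lambda>\<omega>. \<bar>lin_comb c (Y t \<omega>) - \<mu>\<bar>^i)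
      = expectation (\<lambda>\<omega>. \<bar>lin_comb c (prototype t \<omega>) - \<mu>\<bar>^i)"
    by (rule expectation_Y_eq_prototype[OF t])
  also have "\<dots> \<le> expectation ?B" by (intro integral_mono int int_B B)
  also have "\<dots> = 1 + 2^l * mean_bound^l + 4^l * expectation (\<lambda>\<omega>. ?N \<omega> ^ l)"
    using prototype_moment(1)[OF t] by (simp add: prob_space)
  also have "\<dots> \<le> centred_moment_const" using prototype_moment(2)[OF t] by simp
  finally show "expectation (\<lambda>\<omega>. \<bar>lin_comb c (Y t \<omega>) - \<mu>\<bar>^i) \<le> centred_moment_const" .
qed

lemma integrable_lin_comb_Y:
  assumes t: "t \<in> gw_index_set" and c: "\<bar>fst c\<bar> \<le> 1" "\<bar>snd c\<bar> \<le> 1"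
  shows "integrable M (\<lambda>\<omega>. lin_comb c (Y t \<omega>))"
  using centred_lin_comb_moment(1)[OF t c, of 0 1] mean_bound_ge_1 l_pos
    integrable_abs_iff[OF measurable_compose[OF measurable_Y[OF t]]]
  by simp

definition "mean_lin c t = (case t of
    Xi k j i \<Rightarrow> (if i = 1 then fst c * \<alpha> + snd c * \<beta> else fst c * \<beta> + snd c * \<alpha>)
  | Eps k \<Rightarrow> fst c * m\<epsilon>1 + snd c * m\<epsilon>2)"

lemma expectation_lin_comb_Y:
  assumes t: "t \<in> gw_index_set"
  shows "expectation (\<lambda>\<omega>. lin_comb c (Y t \<omega>)) = mean_lin c t"
proof -
  have int: "integrable M (\<lambda>\<omega>. real (fst (prototype t \<omega>)))" "integrable M (\<lambda>\<omega>. real (snd (prototype t \<omega>)))"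
    using integrable_lin_comb_Y[OF t, of "(1,0)"] integrable_lin_comb_Y[OF t, of "(0,1)"]
      integrable_Y_iff_prototype[OF t, of "lin_comb (1,0)"]
      integrable_Y_iff_prototype[OF t, of "lin_comb (0,1)"]
    by (simp_all add: lin_comb_def)
  have "expectation (\<lambda>\<omega>. lin_comb c (Y t \<omega>)) = expectation (\<lambda>\<omega>. lin_comb c (prototype t \<omega>))"
    by (rule expectation_Y_eq_prototype[OF t])
  also have "\<dots> = fst c * expectation (\<lambda>\<omega>. real (fst (prototype t \<omega>)))
                 + snd c * expectation (\<lambda>\<omega>. real (snd (prototype t \<omega>)))"
    unfolding lin_comb_def using int by simp
  also have "\<dots> = mean_lin c t"
    using t mean1 mean2
    by (cases t) (auto simp: prototype_def mean_lin_def m\<epsilon>1_def m\<epsilon>2_def)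
  finally show ?thesis .
qed

lemma abs_mean_lin_le:
  assumes "\<bar>fst c\<bar> \<le> 1" "\<bar>snd c\<bar> \<le> 1"
  shows "\<bar>mean_lin c t\<bar> \<le> mean_bound"
proof -
  have comb: "\<bar>x * a + y * b\<bar> \<le> \<bar>a\<bar> + \<bar>b\<bar>" if "\<bar>x\<bar> \<le> 1" "\<bar>y\<bar> \<le> 1" for x y a b :: real
    using that abs_triangle_ineq[of "x * a" "y * b"]
      mult_left_le_one_le[of "\<bar>a\<bar>" "\<bar>x\<bar>"] mult_left_le_one_le[of "\<bar>b\<bar>" "\<bar>y\<bar>"]
    by (simp add: abs_mult)
  show ?thesis
    using comb[OF assms, of \<alpha> \<beta>] comb[OF assms, of \<beta> \<alpha>] comb[OF assms, of m\<epsilon>1 m\<epsilon>2] alpha beta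
    by (cases t) (auto simp: mean_lin_def mean_bound_def)
qed

lemma sum_mean_lin_gw_step_indices:
  "(\<Sum>t\<in>gw_step_indices k v. mean_lin c t)
   = real (fst v) * (fst c * \<alpha> + snd c * \<beta>) + real (snd v) * (fst c * \<beta> + snd c * \<alpha>)
     + (fst c * m\<epsilon>1 + snd c * m\<epsilon>2)"
  unfolding sum_gw_step_indices by (simp add: mean_lin_def)

lemma lin_comb_gw_step:
  "lin_comb c (gw_step (Suc k) v (gen_vars (Suc k) \<omega>)) = (\<Sum>t\<in>gw_step_indices (Suc k) v. lin_comb c (Y t \<omega>))"
  unfolding gen_vars_def gw_step_restrict_gen sum_gw_step_indices lin_comb_add lin_comb_sum Y_Xi Y_Eps ..

definition "innov c k v \<omega> =
  lin_comb c (gw_step (Suc k) v (gen_vars (Suc k) \<omega>)) - (\<Sum>t\<in>gw_step_indices (Suc k) v. mean_lin c t)"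

definition "innov_moment_const = (1 + l * centred_moment_const) * real l ^ l"

lemma innov_moment_const_nonneg: "0 \<le> innov_moment_const"
  using centred_moment_const_ge_1 by (simp add: innov_moment_const_def)

lemma expectation_innov:
  assumes c: "\<bar>fst c\<bar> \<le> 1" "\<bar>snd c\<bar> \<le> 1"
  shows "expectation (innov c k v) = 0"
proof -
  have J: "gw_step_indices (Suc k) v \<subseteq> gw_index_set" by (rule gw_step_indices_subset) simp
  then have int: "\<And>t. t \<in> gw_step_indices (Suc k) v \<Longrightarrow> integrable M (\<lambda>\<omega>. lin_comb c (Y t \<omega>))"
    using integrable_lin_comb_Y[OF _ c] by blast
  have "expectation (innov c k v)
      = (\<Sum>t\<in>gw_step_indices (Suc k) v. expectation (\<lambda>\<omega>. lin_comb c (Y t \<omega>)))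
        - (\<Sum>t\<in>gw_step_indices (Suc k) v. mean_lin c t)"
    unfolding innov_def[abs_def] lin_comb_gw_step using int
    by (simp add: Bochner_Integration.integral_diff Bochner_Integration.integral_sum prob_space)
  also have "\<dots> = 0" using J by (simp add: expectation_lin_comb_Y subset_eq)
  finally show ?thesis .
qed

text \<open>Given the state \<open>v\<close>, the innovation is a sum of \<open>card (gw_step_indices (Suc k) v) = fst v + snd v + 1\<close>
  independent centred terms.\<close>

lemma innov_prod_moment:
  fixes cr :: "nat \<Rightarrow> real \<times> real"
  assumes cr: "\<And>r. r < m \<Longrightarrow> \<bar>fst (cr r)\<bar> \<le> 1 \<and> \<bar>snd (cr r)\<bar> \<le> 1" and m: "m \<le> l"
  shows "integrable M (\<lambda>\<omega>. \<Prod>r<m. innov (cr r) k v \<omega>)"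
    and "\<bar>expectation (\<lambda>\<omega>. \<Prod>r<m. innov (cr r) k v \<omega>)\<bar>
          \<le> innov_moment_const * (real (fst v) + real (snd v) + 1) ^ (m div 2)"
proof -
  let ?J = "gw_step_indices (Suc k) v"
  have J: "?J \<subseteq> gw_index_set" by (rule gw_step_indices_subset) simp
  define g where "g r t p = lin_comb (cr r) p - mean_lin (cr r) t" for r t p
  have eq: "(\<lambda>\<omega>. \<Prod>r<m. innov (cr r) k v \<omega>) = (\<lambda>\<omega>. \<Prod>r<m. \<Sum>t\<in>?J. g r t (Y t \<omega>))"
    unfolding innov_def lin_comb_gw_step g_def by (simp add: sum_subtractf)
  have K: "0 \<le> centred_moment_const" using centred_moment_const_ge_1 by simp
  have in_J: "t \<in> gw_index_set" if "t \<in> ?J" for t using that J by auto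
  note bound = indep_centred_prod_sum_moment_bound[where Y=Y and J="?J" and g=g and m=m,
      OF indep_vars_subset[OF indep J] finite_gw_step_indices _ _ _ K]
  have hyps: "expectation (\<lambda>\<omega>. g r t (Y t \<omega>)) = 0"
    "integrable M (\<lambda>\<omega>. \<bar>g r t (Y t \<omega>)\<bar>^m)"
    "expectation (\<lambda>\<omega>. \<bar>g r t (Y t \<omega>)\<bar>^m) \<le> centred_moment_const"
    if "r < m" "t \<in> ?J" for r t
    using integrable_lin_comb_Y[OF in_J[OF that(2)]] expectation_lin_comb_Y[OF in_J[OF that(2)]]
      centred_lin_comb_moment[OF in_J[OF that(2)] _ _ abs_mean_lin_le m] cr[OF that(1)]
    by (simp_all add: g_def prob_space)
  show "integrable M (\<lambda>\<omega>. \<Prod>r<m. innov (cr r) k v \<omega>)"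
    unfolding eq by (rule bound(1)) (use hyps in auto)
  have "\<bar>expectation (\<lambda>\<omega>. \<Prod>r<m. innov (cr r) k v \<omega>)\<bar>
      \<le> (1 + real m * centred_moment_const) * (real (m ^ m) * real (card ?J) ^ (m div 2))"
    unfolding eq using bound(2) hyps by simp
  also have "\<dots> \<le> innov_moment_const * (real (fst v) + real (snd v) + 1) ^ (m div 2)"
  proof -
    have "m ^ m \<le> l ^ l" using m l_pos power_mono[of m l m] power_increasing[of m l l] by auto
    then have "real (m ^ m) \<le> real l ^ l" by (metis of_nat_le_iff of_nat_power)
    moreover have "1 + real m * centred_moment_const \<le> 1 + real l * centred_moment_const"
      using m K by (simp add: mult_right_mono)
    ultimately show ?thesis
      unfolding innov_moment_const_def card_gw_step_indices using K
      by (simp add: mult_mono mult.assoc add.commute add.left_commute)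
  qed
  finally show "\<bar>expectation (\<lambda>\<omega>. \<Prod>r<m. innov (cr r) k v \<omega>)\<bar>
      \<le> innov_moment_const * (real (fst v) + real (snd v) + 1) ^ (m div 2)" .
qed

definition "U k \<omega> = real (fst (X k \<omega>)) + real (snd (X k \<omega>))"
definition "V k \<omega> = real (fst (X k \<omega>)) - real (snd (X k \<omega>))"

lemma U_nonneg: "0 \<le> U k \<omega>"
  by (simp add: U_def)

lemma abs_V_le_U: "\<bar>V k \<omega>\<bar> \<le> U k \<omega>"
  by (simp add: U_def V_def)

lemma lin_comb_1_1: "lin_comb (1,1) p = real (fst p) + real (snd p)"
  and lin_comb_1_m1: "lin_comb (1,-1) p = real (fst p) - real (snd p)"
  by (simp_all add: lin_comb_def)

lemma innov_power_moment:
  assumes "i \<le> l" "\<bar>fst c\<bar> \<le> 1" "\<bar>snd c\<bar> \<le> 1"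
  shows "integrable M (\<lambda>\<omega>. innov c k v \<omega> ^ i)"
    and "\<bar>expectation (\<lambda>\<omega>. innov c k v \<omega> ^ i)\<bar>
      \<le> innov_moment_const * (real (fst v) + real (snd v) + 1) ^ (i div 2)"
  using innov_prod_moment[where cr="\<lambda>_. c" and m=i and k=k and v=v] assms by simp_all

text \<open>Since \<open>\<alpha> + \<beta> = 1\<close>, the total size \<open>U\<close> is a critical branching process: its conditional
  mean only grows by the immigration mean.\<close>

lemma U_step_moment:
  assumes p: "p \<le> l"
  obtains D where "0 \<le> D"
    and "\<And>k v. integrable M (\<lambda>\<omega>. (1 + lin_comb (1,1) (gw_step (Suc k) v (gen_vars (Suc k) \<omega>)))^p)"
    and "\<And>k v. expectation (\<lambda>\<omega>. (1 + lin_comb (1,1) (gw_step (Suc k) v (gen_vars (Suc k) \<omega>)))^p)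
          \<le> (real (fst v) + real (snd v) + 1)^p + D * (real (fst v) + real (snd v) + 1)^(p-1)"
proof -
  define m where "m = m\<epsilon>1 + m\<epsilon>2"
  have m: "0 \<le> m" by (simp add: m_def m\<epsilon>1_def m\<epsilon>2_def integral_nonneg_AE)
  define D where "D = 2^p * (1 + m)^p * (1 + innov_moment_const)"
  have step: "integrable M (\<lambda>\<omega>. (1 + lin_comb (1,1) (gw_step (Suc k) v (gen_vars (Suc k) \<omega>)))^p)
    \<and> expectation (\<lambda>\<omega>. (1 + lin_comb (1,1) (gw_step (Suc k) v (gen_vars (Suc k) \<omega>)))^p) \<le> z^p + D * z^(p-1)"
    if z: "z = real (fst v) + real (snd v) + 1" for k v z
  proof -
    have sum: "(\<Sum>t\<in>gw_step_indices (Suc k) v. mean_lin (1,1) t) = z - 1 + m"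
      unfolding sum_mean_lin_gw_step_indices z m_def using alphabeta by (simp add: algebra_simps)
    have eq: "(\<lambda>\<omega>. (1 + lin_comb (1,1) (gw_step (Suc k) v (gen_vars (Suc k) \<omega>)))^p)
        = (\<lambda>\<omega>. ((z + m) + innov (1,1) k v \<omega>)^p)"
      unfolding innov_def sum by (simp add: algebra_simps)
    note binom = prob_space.binomial_centred_moment_le[OF prob_space_axioms,
        where N="innov (1,1) k v" and p=p and B=innov_moment_const and z=z and y="z + m"]
    have hyps: "\<And>i. i \<le> p \<Longrightarrow> integrable M (\<lambda>\<omega>. innov (1,1) k v \<omega> ^ i)"
      "expectation (innov (1,1) k v) = 0"
      "\<And>i. 2 \<le> i \<Longrightarrow> i \<le> p \<Longrightarrow> \<bar>expectation (\<lambda>\<omega>. innov (1,1) k v \<omega> ^ i)\<bar>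
        \<le> innov_moment_const * z^(i div 2)"
      using innov_power_moment[of _ "(1,1)" k v] expectation_innov[of "(1,1)" k v] p z by auto
    have "expectation (\<lambda>\<omega>. ((z + m) + innov (1,1) k v \<omega>)^p)
        \<le> centred_binomial_bound p (z + m) innov_moment_const z"
      by (rule binom(2)[OF hyps])
    also have "\<dots> \<le> z^p + D * z^(p-1)"
      using centred_binomial_bound_shift_le[of z m innov_moment_const p] z m innov_moment_const_nonneg
      by (simp add: D_def)
    finally show ?thesis using binom(1)[OF hyps] unfolding eq by simp
  qed
  show ?thesis
    by (rule that[of D]) (use step m innov_moment_const_nonneg in \<open>auto simp: D_def\<close>)
qed

lemma integrable_U_power: "p \<le> l \<Longrightarrow> integrable M (\<lambda>\<omega>. (1 + U k \<omega>)^p)"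
proof (induction k)
  case 0
  then show ?case by (simp add: U_def)
next
  case (Suc k)
  obtain D where D: "0 \<le> D"
    "\<And>k v. integrable M (\<lambda>\<omega>. (1 + lin_comb (1,1) (gw_step (Suc k) v (gen_vars (Suc k) \<omega>)))^p)"
    "\<And>k v. expectation (\<lambda>\<omega>. (1 + lin_comb (1,1) (gw_step (Suc k) v (gen_vars (Suc k) \<omega>)))^p)
          \<le> (real (fst v) + real (snd v) + 1)^p + D * (real (fst v) + real (snd v) + 1)^(p-1)"
    using U_step_moment[OF Suc.prems] by blast
  have bound: "expectation (\<lambda>\<omega>. (1 + lin_comb (1,1) (gw_step (Suc k) v (gen_vars (Suc k) \<omega>)))^p)
      \<le> (1 + D) * (real (fst v) + real (snd v) + 1)^p" for v
    using D(3)[of k v] D(1) power_increasing[of "p - 1" p "real (fst v) + real (snd v) + 1"]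
      mult_left_mono[of _ _ D] by (fastforce simp: algebra_simps)
  have int_bound: "integrable M (\<lambda>\<omega>. (1 + D) * (real (fst (X k \<omega>)) + real (snd (X k \<omega>)) + 1)^p)"
    using Suc.IH[OF Suc.prems] by (simp add: U_def add.commute)
  have nonneg: "\<And>v w. 0 \<le> (1 + lin_comb (1,1) w)^p" by (simp add: lin_comb_def)
  have "integrable M (\<lambda>\<omega>. (1 + lin_comb (1,1) (X (Suc k) \<omega>))^p)"
    by (rule X_Suc_expectation_le(1)[where F="\<lambda>v w. (1 + lin_comb (1,1) w)^p"
          and Bd="\<lambda>v. (1 + D) * (real (fst v) + real (snd v) + 1)^p", OF nonneg D(2) bound int_bound])
  then show ?case by (simp add: lin_comb_1_1 U_def)
qed

lemma U_moment_rec: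
  assumes p: "p \<le> l"
  obtains D where "0 \<le> D"
    and "\<And>k. expectation (\<lambda>\<omega>. (1 + U (Suc k) \<omega>)^p)
          \<le> expectation (\<lambda>\<omega>. (1 + U k \<omega>)^p) + D * expectation (\<lambda>\<omega>. (1 + U k \<omega>)^(p-1))"
proof -
  obtain D where D: "0 \<le> D"
    "\<And>k v. integrable M (\<lambda>\<omega>. (1 + lin_comb (1,1) (gw_step (Suc k) v (gen_vars (Suc k) \<omega>)))^p)"
    "\<And>k v. expectation (\<lambda>\<omega>. (1 + lin_comb (1,1) (gw_step (Suc k) v (gen_vars (Suc k) \<omega>)))^p)
          \<le> (real (fst v) + real (snd v) + 1)^p + D * (real (fst v) + real (snd v) + 1)^(p-1)"
    using U_step_moment[OF p] by blast
  have "expectation (\<lambda>\<omega>. (1 + U (Suc k) \<omega>)^p)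
      \<le> expectation (\<lambda>\<omega>. (1 + U k \<omega>)^p + D * (1 + U k \<omega>)^(p-1))" for k
    using X_Suc_expectation_le(2)[OF _ D(2) D(3), of k]
      integrable_U_power[OF p, of k] integrable_U_power[of "p-1" k] p
    by (simp add: lin_comb_1_1 U_def add_ac)
  also have "\<dots> k = expectation (\<lambda>\<omega>. (1 + U k \<omega>)^p) + D * expectation (\<lambda>\<omega>. (1 + U k \<omega>)^(p-1))" for k
    using integrable_U_power[OF p, of k] integrable_U_power[of "p-1" k] p by simp
  finally show ?thesis using that D(1) by blast
qed

lemma U_moment_bound:
  assumes "p \<le> l"
  obtains C where "\<And>k. expectation (\<lambda>\<omega>. (1 + U k \<omega>)^p) \<le> C * (real k + 1)^p"
  using assms
proof (induction p arbitrary: thesis rule: less_induct)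
  case (less p)
  show ?case
  proof (cases "p = 0")
    case True
    then show ?thesis by (intro less.prems(1)[of 1]) (simp add: prob_space)
  next
    case False
    have "p - 1 < p" "p - 1 \<le> l" using False less.prems(2) by auto
    then obtain C' where C': "\<And>k. expectation (\<lambda>\<omega>. (1 + U k \<omega>)^(p-1)) \<le> C' * (real k + 1)^(p-1)"
      using less.IH by blast
    obtain D where D: "0 \<le> D" "\<And>k. expectation (\<lambda>\<omega>. (1 + U (Suc k) \<omega>)^p)
          \<le> expectation (\<lambda>\<omega>. (1 + U k \<omega>)^p) + D * expectation (\<lambda>\<omega>. (1 + U k \<omega>)^(p-1))"
      using U_moment_rec[OF less.prems(2)] by blast
    define C where "C = max 1 (D * C')"
    have "expectation (\<lambda>\<omega>. (1 + U k \<omega>)^p) \<le> C * (real k + 1)^p" for k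
    proof (induction k)
      case 0
      then show ?case by (simp add: U_def prob_space C_def)
    next
      case (Suc k)
      have "expectation (\<lambda>\<omega>. (1 + U (Suc k) \<omega>)^p) \<le> C * (real k + 1)^p + D * (C' * (real k + 1)^(p-1))"
        using D(2)[of k] Suc.IH C'[of k] D(1) mult_left_mono[of _ _ D] by fastforce
      also have "\<dots> \<le> C * ((real k + 1)^p + (real k + 1)^(p-1))"
        using mult_right_mono[of "D * C'" C "(real k + 1)^(p-1)"] by (simp add: C_def algebra_simps)
      also have "\<dots> \<le> C * (real (Suc k) + 1)^p"
        using power_add_power_pred_le_Suc_power[of "real k + 1" p] False
        by (intro mult_left_mono) (auto simp: C_def)
      finally show ?case .
    qed
    then show ?thesis by (rule less.prems(1))
  qed
qed

end

lemma inflated_contraction_le: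
  fixes \<theta> A :: real
  assumes \<theta>: "0 \<le> \<theta>" "\<theta> < 1" and A: "0 \<le> A"
  shows "(1 + A / (1 + 2 * A / (1 - \<theta>))) * \<theta> \<le> (1 + \<theta>) / 2"
proof -
  define R where "R = 1 + 2 * A / (1 - \<theta>)"
  have R: "1 \<le> R" using \<theta> A by (simp add: R_def)
  have "R * (1 - \<theta>) = (1 - \<theta>) + 2 * A" using \<theta> by (simp add: R_def field_simps)
  then have "2 * (A * \<theta>) \<le> R * (1 - \<theta>)" using A \<theta> mult_left_le[of \<theta> A] by linarith
  then have "A * \<theta> / R \<le> (1 - \<theta>) / 2" using R by (simp add: field_simps)
  then have "(1 + A / R) * \<theta> \<le> (1 + \<theta>) / 2" by (simp add: field_simps)
  then show ?thesis by (simp only: R_def)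
qed

context gw_doubly_symmetric
begin

text \<open>The difference \<open>V\<close> has conditional mean \<open>(\<alpha> - \<beta>) V + (m\<epsilon>1 - m\<epsilon>2)\<close>; since
  \<open>\<bar>\<alpha> - \<beta>\<bar> < 1\<close> its even moments contract, up to a noise term of the order of \<open>U^j\<close>.\<close>

lemma V_step_binomial_le:
  fixes v :: "nat \<times> nat"
  assumes j: "2*j \<le> l" and R: "1 \<le> R"
  defines "x \<equiv> real (fst v) - real (snd v)" and "z \<equiv> real (fst v) + real (snd v) + 1"
    and "A \<equiv> 4^j * innov_moment_const"
  shows "integrable M (\<lambda>\<omega>. lin_comb (1,-1) (gw_step (Suc k) v (gen_vars (Suc k) \<omega>))^(2*j))"
    and "expectation (\<lambda>\<omega>. lin_comb (1,-1) (gw_step (Suc k) v (gen_vars (Suc k) \<omega>))^(2*j))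
      \<le> (1 + A / R) * ((\<alpha> - \<beta>) * x + (m\<epsilon>1 - m\<epsilon>2))^(2*j) + A * (1 + R^j) * z^j"
proof -
  let ?y = "(\<alpha> - \<beta>) * x + (m\<epsilon>1 - m\<epsilon>2)"
  have z1: "1 \<le> z" by (simp add: z_def)
  have sum: "(\<Sum>t\<in>gw_step_indices (Suc k) v. mean_lin (1,-1) t) = ?y"
    unfolding sum_mean_lin_gw_step_indices x_def by (simp add: algebra_simps)
  have eq: "(\<lambda>\<omega>. lin_comb (1,-1) (gw_step (Suc k) v (gen_vars (Suc k) \<omega>))^(2*j))
      = (\<lambda>\<omega>. (?y + innov (1,-1) k v \<omega>)^(2*j))"
    unfolding innov_def sum by simp
  note binom = binomial_centred_moment_le[where N="innov (1,-1) k v" and p="2*j"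
      and B=innov_moment_const and z=z and y="?y"]
  have hyps: "\<And>i. i \<le> 2*j \<Longrightarrow> integrable M (\<lambda>\<omega>. innov (1,-1) k v \<omega> ^ i)"
    "expectation (innov (1,-1) k v) = 0"
    "\<And>i. 2 \<le> i \<Longrightarrow> i \<le> 2*j \<Longrightarrow> \<bar>expectation (\<lambda>\<omega>. innov (1,-1) k v \<omega> ^ i)\<bar>
      \<le> innov_moment_const * z^(i div 2)"
    using innov_power_moment[of _ "(1,-1)" k v] expectation_innov[of "(1,-1)" k v] j
    by (auto simp: z_def)
  show "integrable M (\<lambda>\<omega>. lin_comb (1,-1) (gw_step (Suc k) v (gen_vars (Suc k) \<omega>))^(2*j))"
    unfolding eq by (rule binom(1)[OF hyps])
  show "expectation (\<lambda>\<omega>. lin_comb (1,-1) (gw_step (Suc k) v (gen_vars (Suc k) \<omega>))^(2*j))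
      \<le> (1 + A / R) * ?y^(2*j) + A * (1 + R^j) * z^j"
    unfolding eq
    using order_trans[OF binom(2)[OF hyps]
        centred_binomial_bound_even_le[OF z1 R innov_moment_const_nonneg, of j ?y]]
    by (simp add: A_def)
qed

lemma V_step_moment:
  assumes j: "1 \<le> j" "2*j \<le> l"
  obtains q D where "0 \<le> q" "q < 1" "0 \<le> D"
    and "\<And>k v. integrable M (\<lambda>\<omega>. lin_comb (1,-1) (gw_step (Suc k) v (gen_vars (Suc k) \<omega>))^(2*j))"
    and "\<And>k v. expectation (\<lambda>\<omega>. lin_comb (1,-1) (gw_step (Suc k) v (gen_vars (Suc k) \<omega>))^(2*j))
          \<le> q * (real (fst v) - real (snd v))^(2*j) + D * (real (fst v) + real (snd v) + 1)^j"
proof -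
  define \<rho> where "\<rho> = \<alpha> - \<beta>"
  define \<theta> where "\<theta> = ((1 + \<bar>\<rho>\<bar>) / 2)^(2*j)"
  define A where "A = 4^j * innov_moment_const"
  define R where "R = 1 + 2 * A / (1 - \<theta>)"
  define C where "C = \<bar>\<rho>\<bar> * (2 * \<bar>m\<epsilon>1 - m\<epsilon>2\<bar> / (1 - \<bar>\<rho>\<bar>)) + \<bar>m\<epsilon>1 - m\<epsilon>2\<bar>"
  define D where "D = (1 + A / R) * C^(2*j) + A * (1 + R^j)"
  have \<rho>: "\<bar>\<rho>\<bar> < 1" using alpha beta by (simp add: \<rho>_def)
  have \<theta>: "0 \<le> \<theta>" "\<theta> < 1" using \<rho> j(1) by (auto simp: \<theta>_def power_less_one_iff)
  have A: "0 \<le> A" using innov_moment_const_nonneg by (simp add: A_def)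
  have R: "1 \<le> R" using \<theta> A by (simp add: R_def)
  have step: "expectation (\<lambda>\<omega>. lin_comb (1,-1) (gw_step (Suc k) v (gen_vars (Suc k) \<omega>))^(2*j))
      \<le> (1 + \<theta>) / 2 * x^(2*j) + D * z^j"
    if x: "x = real (fst v) - real (snd v)" and z: "z = real (fst v) + real (snd v) + 1" for k v x z
  proof -
    have "expectation (\<lambda>\<omega>. lin_comb (1,-1) (gw_step (Suc k) v (gen_vars (Suc k) \<omega>))^(2*j))
        \<le> (1 + A / R) * (\<rho> * x + (m\<epsilon>1 - m\<epsilon>2))^(2*j) + A * (1 + R^j) * z^j"
      using V_step_binomial_le(2)[OF j(2) R, where v=v and k=k] by (simp add: x z \<rho>_def A_def)
    also have "\<dots> \<le> (1 + A / R) * (\<theta> * x^(2*j) + C^(2*j)) + A * (1 + R^j) * z^j"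
      using affine_contraction_even_power_le[OF \<rho>, of x "m\<epsilon>1 - m\<epsilon>2" j] A R
      unfolding \<theta>_def C_def by (intro add_right_mono mult_left_mono) auto
    also have "\<dots> \<le> (1 + \<theta>) / 2 * x^(2*j) + D * z^j"
    proof -
      have "((1 + A / R) * \<theta>) * x^(2*j) \<le> (1 + \<theta>) / 2 * x^(2*j)"
        using inflated_contraction_le[OF \<theta> A]
        by (intro mult_right_mono) (simp_all add: R_def power_mult)
      moreover have "0 \<le> (1 + A / R) * C^(2*j)" using A R by (simp add: power_mult)
      then have "(1 + A / R) * C^(2*j) \<le> (1 + A / R) * C^(2*j) * z^j"
        using z mult_left_mono[of 1 "z^j"] by fastforce
      moreover have "(1 + A / R) * (\<theta> * x^(2*j) + C^(2*j))
          = ((1 + A / R) * \<theta>) * x^(2*j) + (1 + A / R) * C^(2*j)" by (simp add: algebra_simps)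
      moreover have "D * z^j = (1 + A / R) * C^(2*j) * z^j + A * (1 + R^j) * z^j"
        by (simp add: D_def algebra_simps)
      ultimately show ?thesis by linarith
    qed
    finally show ?thesis .
  qed
  show ?thesis
  proof (rule that[of "(1 + \<theta>) / 2" D])
    show "0 \<le> (1 + \<theta>) / 2" "(1 + \<theta>) / 2 < 1" using \<theta> by auto
    show "0 \<le> D" using A R by (simp add: D_def power_mult)
    show "integrable M (\<lambda>\<omega>. lin_comb (1,-1) (gw_step (Suc k) v (gen_vars (Suc k) \<omega>))^(2*j))" for k v
      by (rule V_step_binomial_le(1)[OF j(2) order_refl])
  qed (rule step; simp)
qed

lemma integrable_V_power:
  assumes "2*j \<le> l"
  shows "integrable M (\<lambda>\<omega>. V k \<omega> ^ (2*j))"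
proof (rule Bochner_Integration.integrable_bound[OF integrable_U_power[OF assms, of k]])
  show "(\<lambda>\<omega>. V k \<omega> ^ (2*j)) \<in> borel_measurable M"
    unfolding V_def by (rule measurable_X_fun[where F="\<lambda>v. (real (fst v) - real (snd v))^(2*j)"])
  have "\<bar>V k \<omega>\<bar>^(2*j) \<le> (1 + U k \<omega>)^(2*j)" for \<omega>
    using abs_V_le_U[of k \<omega>] by (intro power_mono) auto
  then show "AE \<omega> in M. norm (V k \<omega> ^ (2*j)) \<le> norm ((1 + U k \<omega>)^(2*j))"
    using U_nonneg[of k] by (simp add: power_abs)
qed

lemma V_moment_rec:
  assumes j: "1 \<le> j" "2*j \<le> l"
  obtains q D where "0 \<le> q" "q < 1" "0 \<le> D"
    and "\<And>k. expectation (\<lambda>\<omega>. V (Suc k) \<omega> ^ (2*j))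
          \<le> q * expectation (\<lambda>\<omega>. V k \<omega> ^ (2*j)) + D * expectation (\<lambda>\<omega>. (1 + U k \<omega>)^j)"
proof -
  obtain q D where qD: "0 \<le> q" "q < 1" "0 \<le> D"
    and int: "\<And>k v. integrable M (\<lambda>\<omega>. lin_comb (1,-1) (gw_step (Suc k) v (gen_vars (Suc k) \<omega>))^(2*j))"
    and step: "\<And>k v. expectation (\<lambda>\<omega>. lin_comb (1,-1) (gw_step (Suc k) v (gen_vars (Suc k) \<omega>))^(2*j))
          \<le> q * (real (fst v) - real (snd v))^(2*j) + D * (real (fst v) + real (snd v) + 1)^j"
    using V_step_moment[OF j] by blast
  have "expectation (\<lambda>\<omega>. V (Suc k) \<omega> ^ (2*j))
      \<le> q * expectation (\<lambda>\<omega>. V k \<omega> ^ (2*j)) + D * expectation (\<lambda>\<omega>. (1 + U k \<omega>)^j)" for k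
  proof -
    let ?Bd = "\<lambda>v. q * (real (fst v) - real (snd v))^(2*j) + D * (real (fst v) + real (snd v) + 1)^j"
    have int_k: "integrable M (\<lambda>\<omega>. V k \<omega> ^ (2*j))" "integrable M (\<lambda>\<omega>. (1 + U k \<omega>)^j)"
      using integrable_V_power[OF j(2)] integrable_U_power[of j k] j by auto
    have Bd_eq: "(\<lambda>\<omega>. ?Bd (X k \<omega>)) = (\<lambda>\<omega>. q * V k \<omega> ^ (2*j) + D * (1 + U k \<omega>)^j)"
      by (simp add: V_def U_def add_ac)
    have V_Suc: "(\<lambda>\<omega>. lin_comb (1,-1) (X (Suc k) \<omega>) ^ (2*j)) = (\<lambda>\<omega>. V (Suc k) \<omega> ^ (2*j))"
      by (simp only: lin_comb_1_m1 V_def)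
    have nonneg: "\<And>v w. 0 \<le> lin_comb (1,-1) w ^ (2*j)" by (simp add: power_mult)
    have int_Bd: "integrable M (\<lambda>\<omega>. ?Bd (X k \<omega>))" unfolding Bd_eq using int_k by simp
    have "expectation (\<lambda>\<omega>. V (Suc k) \<omega> ^ (2*j)) \<le> expectation (\<lambda>\<omega>. ?Bd (X k \<omega>))"
      unfolding V_Suc[symmetric]
      by (rule X_Suc_expectation_le(2)[where F="\<lambda>v w. lin_comb (1,-1) w ^ (2*j)" and Bd="?Bd",
            OF nonneg int step int_Bd])
    also have "\<dots> = q * expectation (\<lambda>\<omega>. V k \<omega> ^ (2*j)) + D * expectation (\<lambda>\<omega>. (1 + U k \<omega>)^j)"
      unfolding Bd_eq using int_k by simp
    finally show ?thesis .
  qed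
  then show ?thesis by (rule that[OF qD])
qed

lemma V_moment_bound:
  assumes j: "2*j \<le> l"
  obtains C where "\<And>k. expectation (\<lambda>\<omega>. V k \<omega> ^ (2*j)) \<le> C * (real k + 1)^j"
proof (cases "j = 0")
  case True
  then show ?thesis using that[of 1] by (simp add: prob_space)
next
  case False
  then have j1: "1 \<le> j" by simp
  obtain q D where qD: "0 \<le> q" "q < 1" "0 \<le> D"
    and rec: "\<And>k. expectation (\<lambda>\<omega>. V (Suc k) \<omega> ^ (2*j))
          \<le> q * expectation (\<lambda>\<omega>. V k \<omega> ^ (2*j)) + D * expectation (\<lambda>\<omega>. (1 + U k \<omega>)^j)"
    using V_moment_rec[OF j1 j] by blast
  obtain C1 where C1: "\<And>k. expectation (\<lambda>\<omega>. (1 + U k \<omega>)^j) \<le> C1 * (real k + 1)^j"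
    using U_moment_bound[of j] j by auto
  have "0 \<le> C1" using C1[of 0] integral_nonneg_AE[of "\<lambda>\<omega>. (1 + U 0 \<omega>)^j" M]
    by (simp add: U_def prob_space)
  define B where "B = D * C1 / (1 - q)"
  have B: "0 \<le> B" "q * B + D * C1 = B" using qD \<open>0 \<le> C1\<close> by (simp_all add: B_def field_simps)
  have "expectation (\<lambda>\<omega>. V k \<omega> ^ (2*j)) \<le> B * (real k + 1)^j" for k
  proof (induction k)
    case 0
    show ?case using B j1 by (simp add: V_def power_0_left)
  next
    case (Suc k)
    have "expectation (\<lambda>\<omega>. V (Suc k) \<omega> ^ (2*j))
        \<le> q * expectation (\<lambda>\<omega>. V k \<omega> ^ (2*j)) + D * expectation (\<lambda>\<omega>. (1 + U k \<omega>)^j)"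
      by (rule rec)
    also have "\<dots> \<le> q * (B * (real k + 1)^j) + D * (C1 * (real k + 1)^j)"
      using Suc.IH C1[of k] qD by (intro add_mono mult_left_mono) auto
    also have "\<dots> = (q * B + D * C1) * (real k + 1)^j" by (simp add: algebra_simps)
    also have "\<dots> = B * (real k + 1)^j" by (simp only: B(2))
    also have "\<dots> \<le> B * (real (Suc k) + 1)^j" using B by (intro mult_left_mono power_mono) auto
    finally show ?case .
  qed
  then show ?thesis by (rule that)
qed

end

lemma prod_list_map_conv_prod_nth: "prod_list (map f xs) = (\<Prod>r<length xs. f (xs ! r))"
proof (induction xs)
  case (Cons x xs)
  then show ?case by (simp del: prod.lessThan_Suc add: prod.lessThan_Suc_shift)
qed simp

context gw_doubly_symmetric
begin

lemma moment_le_U_moment: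
  fixes F :: "nat \<times> nat \<Rightarrow> real"
  assumes F: "\<And>v. \<bar>F v\<bar> \<le> B * (real (fst v) + real (snd v) + 1)^p" and p: "p \<le> l"
  shows "integrable M (\<lambda>\<omega>. F (X k \<omega>))"
    and "\<bar>expectation (\<lambda>\<omega>. F (X k \<omega>))\<bar> \<le> B * expectation (\<lambda>\<omega>. (1 + U k \<omega>)^p)"
proof -
  have int_U: "integrable M (\<lambda>\<omega>. B * (1 + U k \<omega>)^p)" using integrable_U_power[OF p, of k] by simp
  have F_le: "\<bar>F (X k \<omega>)\<bar> \<le> B * (1 + U k \<omega>)^p" for \<omega>
    using F[of "X k \<omega>"] by (simp add: U_def add_ac)
  show int: "integrable M (\<lambda>\<omega>. F (X k \<omega>))"
    by (rule Bochner_Integration.integrable_bound[OF int_U measurable_X_fun])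
       (use F_le in \<open>auto intro!: AE_I2 order_trans[OF _ abs_ge_self]\<close>)
  have "\<bar>expectation (\<lambda>\<omega>. F (X k \<omega>))\<bar> \<le> expectation (\<lambda>\<omega>. \<bar>F (X k \<omega>)\<bar>)"
    by (rule integral_abs_bound)
  also have "\<dots> \<le> expectation (\<lambda>\<omega>. B * (1 + U k \<omega>)^p)"
    using F_le int int_U by (intro integral_mono) auto
  finally show "\<bar>expectation (\<lambda>\<omega>. F (X k \<omega>))\<bar> \<le> B * expectation (\<lambda>\<omega>. (1 + U k \<omega>)^p)"
    by simp
qed

definition "unit_vec i = (if i = (1::nat) then (1::real, 0::real) else (0, 1))"

text \<open>Entry \<open>i\<close> of \<open>M\<^sub>k = X\<^sub>k - m\<^sub>\<xi> X\<^sub>k\<^sub>-\<^sub>1 - m\<^sub>\<epsilon>\<close>; every \<open>i \<noteq> 1\<close> is read as the second entry.\<close>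

definition mart_diff :: "nat \<Rightarrow> 'a \<Rightarrow> nat \<Rightarrow> real" where "mart_diff k \<omega> i =
  (if i = 1 then real (fst (X k \<omega>)) - (\<alpha> * real (fst (X (k - 1) \<omega>)) + \<beta> * real (snd (X (k - 1) \<omega>))) - m\<epsilon>1
   else real (snd (X k \<omega>)) - (\<beta> * real (fst (X (k - 1) \<omega>)) + \<alpha> * real (snd (X (k - 1) \<omega>))) - m\<epsilon>2)"

lemma mart_diff_Suc:
  "mart_diff (Suc k) \<omega> i
   = lin_comb (unit_vec i) (X (Suc k) \<omega>) - (\<Sum>t\<in>gw_step_indices (Suc k) (X k \<omega>). mean_lin (unit_vec i) t)"
  by (simp add: mart_diff_def unit_vec_def lin_comb_def sum_mean_lin_gw_step_indices algebra_simps
      del: gw_X.simps)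

lemma abs_mart_diff_Suc_le: "\<bar>mart_diff (Suc k) \<omega> i\<bar> \<le> mean_bound * ((1 + U (Suc k) \<omega>) + (1 + U k \<omega>))"
proof -
  have c: "\<bar>fst (unit_vec i)\<bar> \<le> 1" "\<bar>snd (unit_vec i)\<bar> \<le> 1" by (simp_all add: unit_vec_def)
  have "\<bar>\<Sum>t\<in>gw_step_indices (Suc k) (X k \<omega>). mean_lin (unit_vec i) t\<bar>
      \<le> (\<Sum>t\<in>gw_step_indices (Suc k) (X k \<omega>). mean_bound)"
    using abs_mean_lin_le[OF c] by (intro order_trans[OF sum_abs] sum_mono)
  also have "\<dots> = mean_bound * (1 + U k \<omega>)" by (simp add: card_gw_step_indices U_def add_ac)
  finally have "\<bar>mart_diff (Suc k) \<omega> i\<bar> \<le> U (Suc k) \<omega> + mean_bound * (1 + U k \<omega>)"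
    unfolding mart_diff_Suc using abs_lin_comb_le_fst_plus_snd[OF c, of "X (Suc k) \<omega>"]
    by (simp add: U_def del: gw_X.simps)
  moreover have "U (Suc k) \<omega> \<le> mean_bound * (1 + U (Suc k) \<omega>)"
    using mean_bound_ge_1 U_nonneg[of "Suc k" \<omega>] mult_mono[of 1 mean_bound "U (Suc k) \<omega>" "1 + U (Suc k) \<omega>"]
    by simp
  ultimately show ?thesis by (simp add: algebra_simps)
qed

lemma integrable_kron_mart_diff_Suc:
  assumes "length is \<le> l"
  shows "integrable M (\<lambda>\<omega>. kron_pow_entry (mart_diff (Suc k) \<omega>) is)"
proof -
  let ?n = "length is"
  let ?B = "\<lambda>\<omega>. mean_bound^?n * (2^?n * ((1 + U (Suc k) \<omega>)^?n + (1 + U k \<omega>)^?n))"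
  have int_B: "integrable M ?B" using integrable_U_power[OF assms] by simp
  have le: "\<bar>kron_pow_entry (mart_diff (Suc k) \<omega>) is\<bar> \<le> ?B \<omega>" for \<omega>
  proof -
    let ?Q = "mean_bound * ((1 + U (Suc k) \<omega>) + (1 + U k \<omega>))"
    have "\<bar>kron_pow_entry (mart_diff (Suc k) \<omega>) is\<bar> \<le> (\<Prod>r<?n. ?Q)"
      unfolding kron_pow_entry_def prod_list_map_conv_prod_nth abs_prod
      by (intro prod_mono conjI abs_ge_zero abs_mart_diff_Suc_le)
    also have "\<dots> = ?Q ^ ?n" by simp
    also have "\<dots> \<le> ?B \<omega>"
      unfolding power_mult_distrib using mean_bound_ge_1 U_nonneg[of k \<omega>] U_nonneg[of "Suc k" \<omega>]
      by (intro mult_left_mono power_add_le_2_power) auto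
    finally show ?thesis .
  qed
  have "(\<lambda>\<omega>. kron_pow_entry (mart_diff (Suc k) \<omega>) is) \<in> borel_measurable M"
    unfolding kron_pow_entry_def mart_diff_Suc
    by (rule measurable_X_X_Suc[where F="\<lambda>v w. \<Prod>i\<leftarrow>is. lin_comb (unit_vec i) w
        - (\<Sum>t\<in>gw_step_indices (Suc k) v. mean_lin (unit_vec i) t)"])
  then show ?thesis
    by (rule Bochner_Integration.integrable_bound[OF int_B])
       (use le in \<open>auto intro!: AE_I2 order_trans[OF _ abs_ge_self]\<close>)
qed

text \<open>Given \<open>X k = v\<close>, the \<open>r\<close>-th factor is an innovation; so the conditional expectation is
  \<open>O(\<bar>v\<bar>^(l div 2))\<close>, and taking expectations brings in the \<open>(l div 2)\<close>-th moment of \<open>U k\<close>.\<close>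

lemma kron_mart_diff_Suc_moment_le:
  assumes "length is = l"
  shows "\<bar>expectation (\<lambda>\<omega>. kron_pow_entry (mart_diff (Suc k) \<omega>) is)\<bar>
    \<le> innov_moment_const * expectation (\<lambda>\<omega>. (1 + U k \<omega>)^(l div 2))"
proof -
  let ?c = "\<lambda>r. unit_vec (is ! r)"
  let ?F = "\<lambda>v w. \<Prod>r<l. lin_comb (?c r) w - (\<Sum>t\<in>gw_step_indices (Suc k) v. mean_lin (?c r) t)"
  have c: "\<And>r. \<bar>fst (?c r)\<bar> \<le> 1 \<and> \<bar>snd (?c r)\<bar> \<le> 1" by (simp add: unit_vec_def)
  have eq: "kron_pow_entry (mart_diff (Suc k) \<omega>) is = ?F (X k \<omega>) (X (Suc k) \<omega>)" for \<omega>
    by (simp only: kron_pow_entry_def prod_list_map_conv_prod_nth mart_diff_Suc assms)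
  have int: "integrable M (\<lambda>\<omega>. ?F (X k \<omega>) (X (Suc k) \<omega>))"
    using integrable_kron_mart_diff_Suc[OF eq_imp_le[OF assms], of k] by (simp only: eq)
  have "expectation (\<lambda>\<omega>. kron_pow_entry (mart_diff (Suc k) \<omega>) is)
      = expectation (\<lambda>\<omega>. ?F (X k \<omega>) (X (Suc k) \<omega>))"
    unfolding eq ..
  also have "\<dots> = expectation (\<lambda>\<omega>. expectation (\<lambda>\<omega>'. \<Prod>r<l. innov (?c r) k (X k \<omega>) \<omega>'))"
    unfolding integral_X_Suc_eq[OF int] innov_def ..
  finally have E: "expectation (\<lambda>\<omega>. kron_pow_entry (mart_diff (Suc k) \<omega>) is)
      = expectation (\<lambda>\<omega>. expectation (\<lambda>\<omega>'. \<Prod>r<l. innov (?c r) k (X k \<omega>) \<omega>'))" .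
  show ?thesis unfolding E
  proof (rule moment_le_U_moment(2))
    show "\<bar>expectation (\<lambda>\<omega>'. \<Prod>r<l. innov (?c r) k v \<omega>')\<bar>
        \<le> innov_moment_const * (real (fst v) + real (snd v) + 1) ^ (l div 2)" for v
      by (rule innov_prod_moment(2)[OF c order_refl])
  qed simp
qed

end

lemma bigo_real_power_if_bounded:
  fixes f :: "nat \<Rightarrow> real"
  assumes "\<And>k. \<bar>f k\<bar> \<le> C * (real k + 1)^p"
  shows "f \<in> O(\<lambda>k. real k ^ p)"
proof (rule bigoI[where c="\<bar>C\<bar> * 2^p"])
  show "\<forall>\<^sub>F k in at_top. norm (f k) \<le> \<bar>C\<bar> * 2^p * norm (real k ^ p)"
    unfolding eventually_at_top_linorder
  proof (intro exI[of _ 1] allI impI)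
    fix k :: nat assume k: "1 \<le> k"
    have "\<bar>f k\<bar> \<le> C * (real k + 1)^p" by (rule assms)
    also have "\<dots> \<le> \<bar>C\<bar> * (real k + 1)^p" by (intro mult_right_mono) auto
    also have "(real k + 1)^p \<le> (2 * real k)^p" using k by (intro power_mono) auto
    then have "\<bar>C\<bar> * (real k + 1)^p \<le> \<bar>C\<bar> * (2 * real k)^p" by (intro mult_left_mono) auto
    also have "\<dots> = \<bar>C\<bar> * 2^p * real k ^ p" by (simp add: power_mult_distrib)
    finally show "norm (f k) \<le> \<bar>C\<bar> * 2^p * norm (real k ^ p)" by simp
  qed
qed

lemma bigo_real_power_if_bounded_Suc:
  fixes f :: "nat \<Rightarrow> real"
  assumes "\<And>k. \<bar>f (Suc k)\<bar> \<le> C * (real k + 1)^p"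
  shows "f \<in> O(\<lambda>k. real k ^ p)"
proof (rule bigoI[where c="\<bar>C\<bar>"])
  show "\<forall>\<^sub>F k in at_top. norm (f k) \<le> \<bar>C\<bar> * norm (real k ^ p)"
    unfolding eventually_at_top_linorder
  proof (intro exI[of _ 1] allI impI)
    fix k :: nat assume k: "1 \<le> k"
    then obtain k' where k': "k = Suc k'" by (cases k) auto
    have "\<bar>f k\<bar> \<le> C * (real k' + 1)^p" unfolding k' by (rule assms)
    also have "\<dots> \<le> \<bar>C\<bar> * (real k' + 1)^p" by (intro mult_right_mono) auto
    also have "(real k' + 1) = real k" using k' by simp
    finally show "norm (f k) \<le> \<bar>C\<bar> * norm (real k ^ p)" by simp
  qed
qed

context gw_doubly_symmetric
begin

lemma norm_X_moment_bigo: "(\<lambda>k. expectation (\<lambda>\<omega>. norm (vec_real (X k \<omega>)) ^ l)) \<in> O(\<lambda>k. real k ^ l)"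
proof -
  obtain C where C: "\<And>k. expectation (\<lambda>\<omega>. (1 + U k \<omega>)^l) \<le> C * (real k + 1)^l"
    using U_moment_bound by blast
  have norm_le: "norm (vec_real v) \<le> real (fst v) + real (snd v) + 1" for v
    using sqrt_sum_squares_le_sum_abs[of "real (fst v)" "real (snd v)"]
    by (simp add: vec_real_def norm_Pair)
  have le: "\<bar>expectation (\<lambda>\<omega>. norm (vec_real (X k \<omega>)) ^ l)\<bar> \<le> 1 * expectation (\<lambda>\<omega>. (1 + U k \<omega>)^l)" for k
    by (rule moment_le_U_moment(2)) (simp_all add: norm_le power_mono)
  have "\<bar>expectation (\<lambda>\<omega>. norm (vec_real (X k \<omega>)) ^ l)\<bar> \<le> C * (real k + 1)^l" for k
    using le[of k] C[of k] by linarith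
  then show ?thesis by (rule bigo_real_power_if_bounded)
qed

lemma U_moment_bigo: "(\<lambda>k. expectation (\<lambda>\<omega>. U k \<omega> ^ l)) \<in> O(\<lambda>k. real k ^ l)"
proof -
  obtain C where C: "\<And>k. expectation (\<lambda>\<omega>. (1 + U k \<omega>)^l) \<le> C * (real k + 1)^l"
    using U_moment_bound by blast
  have le: "\<bar>expectation (\<lambda>\<omega>. (real (fst (X k \<omega>)) + real (snd (X k \<omega>))) ^ l)\<bar>
      \<le> 1 * expectation (\<lambda>\<omega>. (1 + U k \<omega>)^l)" for k
    by (rule moment_le_U_moment(2)) (simp_all add: power_mono)
  have "\<bar>expectation (\<lambda>\<omega>. U k \<omega> ^ l)\<bar> \<le> C * (real k + 1)^l" for k
    using le[of k] C[of k] unfolding U_def by linarith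
  then show ?thesis by (rule bigo_real_power_if_bounded)
qed

lemma V_moment_bigo:
  assumes "2 * j \<le> l"
  shows "(\<lambda>k. expectation (\<lambda>\<omega>. V k \<omega> ^ (2 * j))) \<in> O(\<lambda>k. real k ^ j)"
proof -
  obtain C where "\<And>k. expectation (\<lambda>\<omega>. V k \<omega> ^ (2*j)) \<le> C * (real k + 1)^j"
    using V_moment_bound[OF assms] by blast
  moreover have "0 \<le> expectation (\<lambda>\<omega>. V k \<omega> ^ (2*j))" for k
    by (simp add: integral_nonneg_AE power_mult)
  ultimately show ?thesis by (intro bigo_real_power_if_bounded[where C=C]) simp
qed

lemma kron_mart_diff_moment_bigo:
  assumes "length is = l"
  shows "(\<lambda>k. expectation (\<lambda>\<omega>. kron_pow_entry (mart_diff k \<omega>) is)) \<in> O(\<lambda>k. real k ^ (l div 2))"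
proof -
  obtain C where C: "\<And>k. expectation (\<lambda>\<omega>. (1 + U k \<omega>)^(l div 2)) \<le> C * (real k + 1)^(l div 2)"
    using U_moment_bound[of "l div 2"] by auto
  have "\<bar>expectation (\<lambda>\<omega>. kron_pow_entry (mart_diff (Suc k) \<omega>) is)\<bar>
      \<le> (innov_moment_const * C) * (real k + 1)^(l div 2)" for k
    using order_trans[OF kron_mart_diff_Suc_moment_le[OF assms, of k]
        mult_left_mono[OF C[of k] innov_moment_const_nonneg]]
    by (simp add: mult.assoc)
  then show ?thesis by (rule bigo_real_power_if_bounded_Suc)
qed

end

theorem corollaryB7:
  fixes M :: "'a measure"
    and \<xi> :: "nat \<Rightarrow> nat \<Rightarrow> nat \<Rightarrow> 'a \<Rightarrow> nat \<times> nat"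
    and \<epsilon> :: "nat \<Rightarrow> 'a \<Rightarrow> nat \<times> nat"
    and \<alpha> \<beta> :: real and l :: nat
  assumes P: "prob_space M"
    and indep: "prob_space.indep_vars M (\<lambda>_. count_space UNIV) (gw_family \<xi> \<epsilon>) gw_index_set"
    and ident_xi: "\<And>k j i. 1 \<le> k \<Longrightarrow> 1 \<le> j \<Longrightarrow> i \<in> {1,2} \<Longrightarrow>
                     distr M (count_space UNIV) (\<xi> k j i) = distr M (count_space UNIV) (\<xi> 1 1 i)"
    and ident_eps: "\<And>k. 1 \<le> k \<Longrightarrow>
                     distr M (count_space UNIV) (\<epsilon> k) = distr M (count_space UNIV) (\<epsilon> 1)"
    and alpha: "0 < \<alpha>" "\<alpha> < 1" and beta: "0 < \<beta>" "\<beta> < 1" and alphabeta: "\<alpha> + \<beta> = 1"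
    and mean1: "prob_space.expectation M (\<lambda>\<omega>. real (fst (\<xi> 1 1 1 \<omega>))) = \<alpha>"
               "prob_space.expectation M (\<lambda>\<omega>. real (snd (\<xi> 1 1 1 \<omega>))) = \<beta>"
    and mean2: "prob_space.expectation M (\<lambda>\<omega>. real (fst (\<xi> 1 1 2 \<omega>))) = \<beta>"
               "prob_space.expectation M (\<lambda>\<omega>. real (snd (\<xi> 1 1 2 \<omega>))) = \<alpha>"
    and l_pos: "1 \<le> l"
    and mom: "integrable M (\<lambda>\<omega>. norm (vec_real (\<xi> 1 1 1 \<omega>)) ^ l)"
             "integrable M (\<lambda>\<omega>. norm (vec_real (\<xi> 1 1 2 \<omega>)) ^ l)"
             "integrable M (\<lambda>\<omega>. norm (vec_real (\<epsilon> 1 \<omega>)) ^ l)"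
  defines "X \<equiv> gw_X \<xi> \<epsilon>"
    and "m\<epsilon>1 \<equiv> prob_space.expectation M (\<lambda>\<omega>. real (fst (\<epsilon> 1 \<omega>)))"
    and "m\<epsilon>2 \<equiv> prob_space.expectation M (\<lambda>\<omega>. real (snd (\<epsilon> 1 \<omega>)))"
  defines "Mk \<equiv> (\<lambda>k \<omega> i.
              if i = 1 then real (fst (X k \<omega>)) - (\<alpha> * real (fst (X (k - 1) \<omega>)) + \<beta> * real (snd (X (k - 1) \<omega>))) - m\<epsilon>1
              else real (snd (X k \<omega>)) - (\<beta> * real (fst (X (k - 1) \<omega>)) + \<alpha> * real (snd (X (k - 1) \<omega>))) - m\<epsilon>2)"
    and "U \<equiv> (\<lambda>k \<omega>. real (fst (X k \<omega>)) + real (snd (X k \<omega>)))"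
    and "V \<equiv> (\<lambda>k \<omega>. real (fst (X k \<omega>)) - real (snd (X k \<omega>)))"
  shows "(\<lambda>k. prob_space.expectation M (\<lambda>\<omega>. norm (vec_real (X k \<omega>)) ^ l)) \<in> O(\<lambda>k. real k ^ l)
       \<and> (\<forall>is. length is = l \<and> set is \<subseteq> {1,2} \<longrightarrow>
           (\<lambda>k. prob_space.expectation M (\<lambda>\<omega>. kron_pow_entry (Mk k \<omega>) is)) \<in> O(\<lambda>k. real k ^ (l div 2)))
       \<and> (\<lambda>k. prob_space.expectation M (\<lambda>\<omega>. U k \<omega> ^ l)) \<in> O(\<lambda>k. real k ^ l)
       \<and> (\<forall>j. 2 * j \<le> l \<longrightarrow>
           (\<lambda>k. prob_space.expectation M (\<lambda>\<omega>. V k \<omega> ^ (2 * j))) \<in> O(\<lambda>k. real k ^ j))"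
proof -
  interpret G: gw_doubly_symmetric M \<xi> \<epsilon> \<alpha> \<beta> l
    by (rule gw_doubly_symmetric.intro[OF gw_process.intro[OF P gw_process_axioms.intro[OF indep]]
          gw_doubly_symmetric_axioms.intro])
       (fact ident_xi ident_eps alpha beta alphabeta mean1 mean2 l_pos mom)+
  have "Mk = G.mart_diff" "U = G.U" "V = G.V"
    unfolding Mk_def U_def V_def X_def m\<epsilon>1_def m\<epsilon>2_def
    by (simp_all add: G.mart_diff_def G.U_def G.V_def G.m\<epsilon>1_def G.m\<epsilon>2_def fun_eq_iff)
  then show ?thesis
    using G.norm_X_moment_bigo G.kron_mart_diff_moment_bigo G.U_moment_bigo G.V_moment_bigo
    by (auto simp: X_def)
qed

end
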